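(* Consider the reaction–diffusion system $$u_t-d_1\Delta u=(f(u)-\lambda v)\varphi(u),\qquad v_t-d_2\Delta v=\sigma(g(u)-v)\varphi(u)\quad\text{in }\mathbb{R}^+\times\Omega,$$ with homogeneous Neumann boundary conditions, under the standing assumptions in the context, and assume $0<f'(\alpha)<\min\{\sigma,\lambda g'(\alpha)\}$. Let $F_0=f'(\alpha)\varphi(\alpha)$. If either $\mu_1d_1\ge F_0$, or $\mu_1 d_1<F_0$ and $0<d_2/\sigma<d$, then the constant steady state $(u^*,v^* )=(\alpha,g(\alpha))$ is locally asymptotically stable. If $\mu_1d_1<F_0$ and $d<d_2/\sigma$, then $(u^*,v^* )$ is unstable.
   Context: $\Omega\subset\mathbb{R}^n$ is a bounded domain with smooth boundary, $\nu$ the outer unit normal. The constants $d_1,d_2,\lambda,\sigma$ are strictly positive. The functions $\varphi,f,g$ are continuously differentiable on $[0,\infty)$, and there is $\delta>0$ with $\varphi(0)=0$, $f(\delta)=0$, $g(u),f(u),\varphi(u)>0$ and $g'(u)\ge0$ for $u\in(0,\delta)$; there is $\alpha\in(0,\delta)$ with $\lambda g(\alpha)=f(\alpha)$ and $(\alpha-u)[f(u)-\lambda g(u)]>0$ for $u\in(0,\alpha)\cup(\alpha,\delta)$. Let $0=\mu_0<\mu_1\le\mu_2\le\cdots$, $\mu_i\to\infty$, be the eigenvalues of $-\Delta$ on $\Omega$ with homogeneous Neumann boundary conditions. When $d_1\mu_1<F_0$, let $i_\alpha$ be the largest positive integer such that $d_1\mu_i<F_0$ for all $i\le i_\alpha$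 (so $1\le i_\alpha<\infty$), set $$\widetilde d_i=\varphi(\alpha)\,\frac{\mu_i d_1+\varphi(\alpha)\big(\lambda g'(\alpha)-f'(\alpha)\big)}{\mu_i\,(F_0-\mu_i d_1)},\qquad d=\min_{1\le i\le i_\alpha}\widetilde d_i .$$ Stability is understood via linearization: with the operator $L=\begin{pmatrix} d_1\Delta+f'(\alpha)\varphi(\alpha) & -\lambda\varphi(\alpha)\\ \sigma g'(\alpha)\varphi(\alpha) & d_2\Delta-\sigma\varphi(\alpha)\end{pmatrix}$ acting on pairs of functions with homogeneous Neumann boundary conditions, the steady state is locally asymptotically stable if all eigenvalues of $L$ have negative real part, and unstable if some eigenvalue of $L$ has positive real part. *)

theory Defs
  imports "HOL-Analysis.Analysis"
begin

definition partial :: "'n::finite \<Rightarrow> (real^'n \<Rightarrow> 'b::real_normed_vector) \<Rightarrow> real^'n \<Rightarrow> 'b" where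
  "partial i w x = frechet_derivative w (at x) (axis i 1)"

fun Ck :: "nat \<Rightarrow> (real^'n::finite \<Rightarrow> 'b::real_normed_vector) \<Rightarrow> (real^'n) set \<Rightarrow> bool" where
  "Ck 0 w S = continuous_on S w"
| "Ck (Suc k) w S = (continuous_on S w \<and> (\<forall>x\<in>S. w differentiable (at x)) \<and> (\<forall>i. Ck k (partial i w) S))"

definition smooth_fun :: "(real^'n::finite \<Rightarrow> real) \<Rightarrow> bool" where
  "smooth_fun w \<longleftrightarrow> (\<forall>k. Ck k w UNIV)"

definition laplacian :: "(real^'n::finite \<Rightarrow> 'b::real_normed_vector) \<Rightarrow> real^'n \<Rightarrow> 'b" where
  "laplacian w x = (\<Sum>i\<in>UNIV. partial i (partial i w) x)"

definition grad :: "(real^'n::finite \<Rightarrow> real) \<Rightarrow> real^'n \<Rightarrow> real^'n" where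
  "grad r x = (\<chi> i. partial i r x)"

definition smooth_domain :: "(real^'n::finite) set \<Rightarrow> (real^'n \<Rightarrow> real) \<Rightarrow> bool" where
  "smooth_domain \<Omega> \<rho> \<longleftrightarrow> \<Omega> \<noteq> {} \<and> bounded \<Omega> \<and> connected \<Omega> \<and> smooth_fun \<rho> \<and>
      \<Omega> = {x. \<rho> x < 0} \<and> (\<forall>x. \<rho> x = 0 \<longrightarrow> grad \<rho> x \<noteq> 0)"

definition outer_normal :: "(real^'n::finite \<Rightarrow> real) \<Rightarrow> real^'n \<Rightarrow> real^'n" where
  "outer_normal \<rho> x = grad \<rho> x /\<^sub>R norm (grad \<rho> x)"

text \<open>Admissible functions: classical C^2 functions (extended to the whole space) satisfying the
  homogeneous Neumann condition \<partial>w/\<partial>\<nu> = 0 on \<partial>\<Omega>.\<close>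
definition neumann_fun :: "(real^'n::finite) set \<Rightarrow> (real^'n \<Rightarrow> real) \<Rightarrow> (real^'n \<Rightarrow> 'b::real_normed_vector) \<Rightarrow> bool" where
  "neumann_fun \<Omega> \<rho> w \<longleftrightarrow> Ck 2 w UNIV \<and>
      (\<forall>x\<in>frontier \<Omega>. frechet_derivative w (at x) (outer_normal \<rho> x) = 0)"

definition neumann_eigenfun :: "(real^'n::finite) set \<Rightarrow> (real^'n \<Rightarrow> real) \<Rightarrow> real \<Rightarrow> (real^'n \<Rightarrow> real) \<Rightarrow> bool" where
  "neumann_eigenfun \<Omega> \<rho> \<mu> w \<longleftrightarrow> neumann_fun \<Omega> \<rho> w \<and> (\<forall>x\<in>\<Omega>. - laplacian w x = \<mu> * w x)"

definition lin_indep_on :: "'a set \<Rightarrow> nat \<Rightarrow> (nat \<Rightarrow> 'a \<Rightarrow> real) \<Rightarrow> bool" where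
  "lin_indep_on S k ws \<longleftrightarrow>
     (\<forall>c :: nat \<Rightarrow> real. (\<forall>x\<in>S. (\<Sum>j<k. c j * ws j x) = 0) \<longrightarrow> (\<forall>j<k. c j = 0))"

text \<open>\<mu> is the nondecreasing enumeration, counted with multiplicity, of the Neumann eigenvalues
  of -\<Delta> on \<Omega>: its range is exactly the set of eigenvalues, and each eigenvalue occurs as many
  times as the dimension of its eigenspace.\<close>
definition neumann_eigenvalues :: "(real^'n::finite) set \<Rightarrow> (real^'n \<Rightarrow> real) \<Rightarrow> (nat \<Rightarrow> real) \<Rightarrow> bool" where
  "neumann_eigenvalues \<Omega> \<rho> \<mu> \<longleftrightarrow> mono \<mu> \<and>
     (\<forall>m. (\<exists>i. \<mu> i = m) \<longleftrightarrow> (\<exists>w. neumann_eigenfun \<Omega> \<rho> m w \<and> (\<exists>x\<in>\<Omega>. w x \<noteq> 0))) \<and>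
     (\<forall>m k. (\<exists>ws. (\<forall>j<k. neumann_eigenfun \<Omega> \<rho> m (ws j)) \<and> lin_indep_on \<Omega> k ws)
              \<longleftrightarrow> k \<le> card {i. \<mu> i = m})"

text \<open>\<xi> is an eigenvalue of
  L = [[d1 \<Delta> + a11, a12], [a21, d2 \<Delta> + a22]] on pairs of (complex-valued) functions with
  homogeneous Neumann boundary conditions.\<close>
definition L_eigenvalue :: "(real^'n::finite) set \<Rightarrow> (real^'n \<Rightarrow> real) \<Rightarrow> real \<Rightarrow> real \<Rightarrow>
    real \<Rightarrow> real \<Rightarrow> real \<Rightarrow> real \<Rightarrow> complex \<Rightarrow> bool" where
  "L_eigenvalue \<Omega> \<rho> d1 d2 a11 a12 a21 a22 \<xi> \<longleftrightarrow>
     (\<exists>w1 w2 :: real^'n \<Rightarrow> complex.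
        neumann_fun \<Omega> \<rho> w1 \<and> neumann_fun \<Omega> \<rho> w2 \<and>
        (\<exists>x\<in>\<Omega>. w1 x \<noteq> 0 \<or> w2 x \<noteq> 0) \<and>
        (\<forall>x\<in>\<Omega>. of_real d1 * laplacian w1 x + of_real a11 * w1 x + of_real a12 * w2 x = \<xi> * w1 x) \<and>
        (\<forall>x\<in>\<Omega>. of_real a21 * w1 x + of_real d2 * laplacian w2 x + of_real a22 * w2 x = \<xi> * w2 x))"

definition L_stable where
  "L_stable \<Omega> \<rho> d1 d2 a11 a12 a21 a22 \<longleftrightarrow>
     (\<forall>\<xi>. L_eigenvalue \<Omega> \<rho> d1 d2 a11 a12 a21 a22 \<xi> \<longrightarrow> Re \<xi> < 0)"

definition L_unstable where
  "L_unstable \<Omega> \<rho> d1 d2 a11 a12 a21 a22 \<longleftrightarrow>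
     (\<exists>\<xi>. L_eigenvalue \<Omega> \<rho> d1 d2 a11 a12 a21 a22 \<xi> \<and> Re \<xi> > 0)"

definition i_alpha :: "real \<Rightarrow> (nat \<Rightarrow> real) \<Rightarrow> real \<Rightarrow> nat" where
  "i_alpha d1 \<mu> F0 = Max {i. 1 \<le> i \<and> (\<forall>j\<in>{1..i}. d1 * \<mu> j < F0)}"

text \<open>tilde d_i, with parameters phi(alpha), lambda g'(alpha) - f'(alpha), d1, mu, F0.\<close>
definition d_tilde :: "real \<Rightarrow> real \<Rightarrow> real \<Rightarrow> (nat \<Rightarrow> real) \<Rightarrow> real \<Rightarrow> nat \<Rightarrow> real" where
  "d_tilde pa c d1 \<mu> F0 i = pa * (\<mu> i * d1 + pa * c) / (\<mu> i * (F0 - \<mu> i * d1))"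

definition d_crit :: "real \<Rightarrow> real \<Rightarrow> real \<Rightarrow> (nat \<Rightarrow> real) \<Rightarrow> real \<Rightarrow> real" where
  "d_crit pa c d1 \<mu> F0 = Min (d_tilde pa c d1 \<mu> F0 ` {1..i_alpha d1 \<mu> F0})"

end

theory Submission
  imports Defs
begin

text \<open>On the Neumann eigenspace of \<open>-\<Delta>\<close> for \<open>\<mu>\<^sub>i\<close> the operator \<open>L\<close> acts as a \<open>2\<times>2\<close> matrix with
  trace \<open>T\<^sub>i = F\<^sub>0 - \<sigma>\<phi>(\<alpha>) - (d\<^sub>1 + d\<^sub>2)\<mu>\<^sub>i < 0\<close> and determinant
  \<open>D\<^sub>i = \<sigma>\<phi>(\<alpha>)(\<mu>\<^sub>i d\<^sub>1 + \<phi>(\<alpha>)(\<lambda>g'(\<alpha>) - f'(\<alpha>))) - d\<^sub>2\<mu>\<^sub>i(F\<^sub>0 - \<mu>\<^sub>i d\<^sub>1)\<close>. Every eigenvalue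
  of \<open>L\<close> is a root of some \<open>\<xi>\<^sup>2 - T\<^sub>i\<xi> + D\<^sub>i\<close>, and \<open>D\<^sub>i < 0\<close> produces a positive real eigenvalue,
  so stability is governed by the signs of the \<open>D\<^sub>i\<close>. These are positive unless \<open>0 < d\<^sub>1\<mu>\<^sub>i < F\<^sub>0\<close>,
  and there \<open>D\<^sub>i > 0\<close> is exactly \<open>d\<^sub>2/\<sigma> < d_tilde i\<close>.

  The analytic input is that a complex Neumann eigenfunction \<open>p + iq\<close> of \<open>\<Delta>\<close> has a real
  eigenvalue. Its imaginary part \<open>b\<close> satisfies \<open>div(p\<nabla>q - q\<nabla>p) = b(p\<^sup>2 + q\<^sup>2)\<close> in \<open>\<Omega>\<close>.
  Integrating against cutoffs \<open>\<psi>\<^sub>\<epsilon> = h(\<rho>/\<epsilon>)\<close> that increase to the indicator of \<open>\<Omega> = {\<rho> < 0}\<close>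
  turns \<open>b\<integral>\<psi>\<^sub>\<epsilon>(p\<^sup>2 + q\<^sup>2)\<close> into a boundary-layer flux of \<open>p\<nabla>q - q\<nabla>p\<close> through \<open>\<nabla>\<psi>\<^sub>\<epsilon>\<close>. The Neumann
  condition makes this flux negligible against that of \<open>\<nabla>\<rho>\<close> itself, which stays bounded by
  \<open>\<integral>|\<Delta>\<rho>|\<close>, so \<open>b = 0\<close>.\<close>

definition C1 :: "(real^'n::finite \<Rightarrow> real) \<Rightarrow> bool" where
  "C1 w \<longleftrightarrow> (\<forall>x. w differentiable (at x)) \<and> (\<forall>j. continuous_on UNIV (partial j w))"

lemma partial_eqI:
  assumes "(w has_derivative D) (at x)"
  shows "partial i w x = D (axis i 1)"
  using frechet_derivative_at[OF assms] by (simp add: partial_def)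

lemma Ck_continuous_on: "Ck k w S \<Longrightarrow> continuous_on S w"
  by (cases k) auto

lemma Ck_Suc_imp_C1: "Ck (Suc k) w UNIV \<Longrightarrow> C1 w"
  unfolding C1_def by (auto intro: Ck_continuous_on[of k])

lemma Ck_2_imp_C1_partial: "Ck 2 w UNIV \<Longrightarrow> C1 (partial i w)"
  by (auto simp: numeral_2_eq_2 C1_def)

lemma C1_has_derivative: "C1 w \<Longrightarrow> (w has_derivative frechet_derivative w (at x)) (at x)"
  by (simp add: C1_def frechet_derivative_works[symmetric])

lemma C1_differentiable: "C1 w \<Longrightarrow> w differentiable (at x)"
  by (simp add: C1_def)

lemma C1_continuous_on: "C1 w \<Longrightarrow> continuous_on UNIV w"
  by (meson C1_def continuous_at_imp_continuous_on differentiable_imp_continuous_within)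

lemma C1_continuous_on_partial: "C1 w \<Longrightarrow> continuous_on UNIV (partial j w)"
  by (simp add: C1_def)

lemma C1_intro:
  assumes "\<And>x. (w has_derivative D x) (at x)" "\<And>j. continuous_on UNIV (\<lambda>x. D x (axis j 1))"
  shows "C1 w"
  unfolding C1_def using assms partial_eqI[OF assms(1)] differentiableI by (metis ext)

lemma partial_const: "partial j (\<lambda>x::real^'n::finite. c) x = (0::real)"
  using partial_eqI[of "\<lambda>x::real^'n. c" "\<lambda>h. 0" x j] by simp

lemma C1_const: "C1 (\<lambda>x::real^'n::finite. c)"
  unfolding C1_def partial_const by auto

lemma partial_add:
  fixes w v :: "real^'n::finite \<Rightarrow> 'a::real_normed_vector"
  assumes "w differentiable (at x)" "v differentiable (at x)"
  shows "partial i (\<lambda>x. w x + v x) x = partial i w x + partial i v x"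
  using partial_eqI[OF has_derivative_add[OF assms[unfolded frechet_derivative_works]]]
  by (simp add: partial_def)

lemma partial_linear:
  fixes w :: "real^'n::finite \<Rightarrow> 'a::real_normed_vector"
  assumes "bounded_linear T" "w differentiable (at x)"
  shows "partial i (\<lambda>x. T (w x)) x = T (partial i w x)"
  using partial_eqI[OF bounded_linear.has_derivative[OF assms(1) assms(2)[unfolded frechet_derivative_works]]]
  by (simp add: partial_def)

lemma C1_add:
  assumes "C1 w" "C1 v"
  shows "C1 (\<lambda>x. w x + v x)"
  by (rule C1_intro[OF has_derivative_add[OF C1_has_derivative[OF assms(1)] C1_has_derivative[OF assms(2)]]])
    (use assms in \<open>simp add: partial_def[symmetric] continuous_on_add C1_continuous_on_partial\<close>)

lemma
  assumes "C1 w" "C1 v"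
  shows C1_mult: "C1 (\<lambda>x. w x * v x)"
    and partial_mult: "partial j (\<lambda>x. w x * v x) x = partial j w x * v x + w x * partial j v x"
proof -
  have D: "((\<lambda>x. w x * v x) has_derivative
     (\<lambda>h. w x * frechet_derivative v (at x) h + frechet_derivative w (at x) h * v x)) (at x)" for x
    by (rule has_derivative_mult[OF C1_has_derivative[OF assms(1)] C1_has_derivative[OF assms(2)]])
  show "C1 (\<lambda>x. w x * v x)"
    by (rule C1_intro[OF D])
      (use assms in \<open>simp add: partial_def[symmetric], intro continuous_intros C1_continuous_on C1_continuous_on_partial\<close>)
  show "partial j (\<lambda>x. w x * v x) x = partial j w x * v x + w x * partial j v x"
    using partial_eqI[OF D] by (simp add: partial_def)
qed

lemma
  assumes "C1 w" "C1 v"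
  shows C1_diff: "C1 (\<lambda>x. w x - v x)"
    and partial_diff: "partial j (\<lambda>x. w x - v x) x = partial j w x - partial j v x"
proof -
  have "C1 (\<lambda>x. - v x)" "partial j (\<lambda>x. - v x) x = - partial j v x"
    using C1_mult[OF C1_const[of "-1"] assms(2)]
      partial_mult[OF C1_const[of "-1"] assms(2), of j x]
      partial_const[of j "-1" x] by simp_all
  then show "C1 (\<lambda>x. w x - v x)" "partial j (\<lambda>x. w x - v x) x = partial j w x - partial j v x"
    using C1_add[OF assms(1), of "\<lambda>x. - v x"]
      partial_add[OF C1_differentiable[OF assms(1)] C1_differentiable, of "\<lambda>x. - v x" j] by simp_all
qed

lemma
  assumes "C1 w" and h: "\<And>t. (h has_real_derivative h' t) (at t)" "continuous_on UNIV h'"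
  shows C1_compose: "C1 (\<lambda>x. h (w x))"
    and partial_compose: "partial j (\<lambda>x. h (w x)) x = h' (w x) * partial j w x"
proof -
  have D: "((\<lambda>x. h (w x)) has_derivative (\<lambda>v. h' (w x) * frechet_derivative w (at x) v)) (at x)" for x
    using has_derivative_compose[OF C1_has_derivative[OF assms(1)] h(1)[unfolded has_field_derivative_def]]
    by (simp add: mult.commute)
  show "C1 (\<lambda>x. h (w x))"
    by (rule C1_intro[OF D]) (use assms C1_continuous_on[OF assms(1)] in
        \<open>simp add: partial_def[symmetric], intro continuous_intros C1_continuous_on_partial
           continuous_on_compose2[OF h(2)], auto\<close>)
  show "partial j (\<lambda>x. h (w x)) x = h' (w x) * partial j w x"
    using partial_eqI[OF D] by (simp add: partial_def)
qed

section \<open>Integrals of compactly supported functions\<close>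

lemma integrable_zero_outside_ball:
  fixes f :: "real^'n::finite \<Rightarrow> real"
  assumes "continuous_on UNIV f" "\<And>x. R < norm x \<Longrightarrow> f x = 0"
  shows "f integrable_on UNIV"
proof -
  obtain a b :: "real^'n" where ab: "cball 0 R \<subseteq> cbox a b"
    using bounded_subset_cbox_symmetric[OF bounded_cball] by blast
  have "f integrable_on cbox a b"
    by (rule integrable_continuous) (rule continuous_on_subset[OF assms(1)], simp)
  moreover have "x \<notin> cbox a b \<Longrightarrow> f x = 0" for x
    by (meson ab assms(2) mem_cball_0 not_le subsetD)
  ultimately show ?thesis by (rule integrable_on_superset) auto
qed

lemma integral_translate_zero_outside_ball:
  fixes f :: "real^'n::finite \<Rightarrow> real"
  assumes "continuous_on UNIV f" "\<And>x. R < norm x \<Longrightarrow> f x = 0"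
  shows "integral UNIV (\<lambda>x. f (x + c)) = integral UNIV f"
proof -
  obtain a b :: "real^'n" where ab: "cball 0 R \<subseteq> cbox a b"
    using bounded_subset_cbox_symmetric[OF bounded_cball] by blast
  have zero: "x \<notin> cbox a b \<Longrightarrow> f x = 0" for x
    by (meson ab assms(2) mem_cball_0 not_le subsetD)
  have "f integrable_on cbox a b"
    by (rule integrable_continuous) (rule continuous_on_subset[OF assms(1)], simp)
  then have I: "(f has_integral integral (cbox a b) f) (cbox a b)" by blast
  have "(f has_integral integral (cbox a b) f) UNIV"
    by (rule has_integral_on_superset[OF I]) (use zero in auto)
  then have "integral UNIV f = integral (cbox a b) f" by blast
  moreover have "((f \<circ> (+) c) has_integral integral (cbox a b) f) UNIV"
  proof (rule has_integral_on_superset)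
    show "((f \<circ> (+) c) has_integral integral (cbox a b) f) (cbox (a - c) (b - c))"
      using has_integral_shift_cbox_iff[of f c _ "a - c" "b - c"] I by simp
    show "x \<notin> cbox (a - c) (b - c) \<Longrightarrow> (f \<circ> (+) c) x = 0" for x
      using zero[of "c + x"] by (auto simp: mem_box inner_add_left inner_diff_left algebra_simps)
  qed simp
  then have "integral UNIV (\<lambda>x. f (x + c)) = integral (cbox a b) f"
    by (simp add: o_def add.commute integral_unique)
  ultimately show ?thesis by simp
qed

lemma partial_eq_0_outside_ball:
  fixes w :: "real^'n::finite \<Rightarrow> real"
  assumes "\<And>x. R < norm x \<Longrightarrow> w x = 0" "R < norm x"
  shows "partial i w x = 0"
proof -
  have "((\<lambda>x. 0) has_derivative (\<lambda>h. 0)) (at x)" by simp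
  then have "(w has_derivative (\<lambda>h. 0)) (at x)"
  proof (rule has_derivative_transform_within_open[of _ _ _ _ "{y. R < norm y}"])
    show "open {y::real^'n. R < norm y}" by (intro open_Collect_less continuous_intros)
  qed (use assms in auto)
  then show ?thesis using partial_eqI by auto
qed

lemma uniformly_continuous_zero_outside_ball:
  fixes f :: "real^'n::finite \<Rightarrow> real"
  assumes "continuous_on UNIV f" "\<And>x. R < norm x \<Longrightarrow> f x = 0" "e > 0"
  obtains d where "d > 0" "d \<le> 1" "\<And>x y. dist x y < d \<Longrightarrow> \<bar>f x - f y\<bar> < e"
proof -
  have "uniformly_continuous_on (cball 0 (R+1)) f"
    by (rule compact_uniformly_continuous) (auto intro: continuous_on_subset[OF assms(1)])
  then obtain d where d: "d > 0"
    "\<And>x y. x \<in> cball 0 (R+1) \<Longrightarrow> y \<in> cball 0 (R+1) \<Longrightarrow> dist y x < d \<Longrightarrow> dist (f y) (f x) < e"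
    unfolding uniformly_continuous_on_def using assms(3) by metis
  show ?thesis
  proof (rule that[of "min d 1"])
    fix x y :: "real^'n" assume xy: "dist x y < min d 1"
    show "\<bar>f x - f y\<bar> < e"
    proof (cases "norm x \<le> R + 1 \<and> norm y \<le> R + 1")
      case True then show ?thesis using d(2)[of y x] xy by (auto simp: dist_real_def dist_commute)
    next
      case False
      have "norm x \<le> norm y + dist x y" "norm y \<le> norm x + dist x y"
        by (metis dist_norm norm_triangle_sub dist_commute add.commute)+
      with False xy have "R < norm x" "R < norm y" by auto
      then show ?thesis using assms(2,3) by simp
    qed
  qed (use d in auto)
qed

lemma has_real_derivative_along_axis:
  fixes x :: "real^'n::finite"
  assumes "C1 w"
  shows "((\<lambda>s. w (x + s *\<^sub>R axis i 1)) has_real_derivative partial i w (x + s *\<^sub>R axis i 1)) (at s)"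
proof -
  let ?y = "x + s *\<^sub>R axis i 1"
  have "((\<lambda>s. x + s *\<^sub>R axis i 1) has_derivative (\<lambda>h. h *\<^sub>R axis i 1)) (at s)"
    by (auto intro!: derivative_eq_intros)
  from has_derivative_compose[OF this C1_has_derivative[OF assms]]
  have "((\<lambda>s. w (x + s *\<^sub>R axis i 1)) has_derivative (\<lambda>h. frechet_derivative w (at ?y) (h *\<^sub>R axis i 1))) (at s)"
    by (simp add: o_def)
  moreover have "(\<lambda>h. frechet_derivative w (at ?y) (h *\<^sub>R axis i 1)) = (*) (partial i w ?y)"
    using linear_scale[OF has_derivative_linear[OF C1_has_derivative[OF assms]]]
    by (auto simp: partial_def mult.commute)
  ultimately show ?thesis by (simp add: has_field_derivative_def)
qed

lemma partial_close_to_difference_quotient: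
  assumes "C1 w" "\<And>x y. dist x y < d \<Longrightarrow> \<bar>partial i w x - partial i w y\<bar> < e" "0 < t" "t < d"
  shows "\<bar>partial i w x - (w (x + t *\<^sub>R axis i 1) - w x) / t\<bar> < e"
proof -
  obtain z where z: "0 < z" "z < t"
    "w (x + t *\<^sub>R axis i 1) - w (x + 0 *\<^sub>R axis i 1) = (t - 0) * partial i w (x + z *\<^sub>R axis i 1)"
    using MVT2[of 0 t "\<lambda>s. w (x + s *\<^sub>R axis i 1)" "\<lambda>s. partial i w (x + s *\<^sub>R axis i 1)"]
      has_real_derivative_along_axis[OF assms(1)] assms(3)
    by blast
  have "dist x (x + z *\<^sub>R axis i 1) < d" using z assms(4) by (simp add: dist_norm)
  then show ?thesis using assms(2) z assms(3) by simp
qed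

lemma
  fixes w :: "real^'n::finite \<Rightarrow> real"
  assumes w: "continuous_on UNIV w" "\<And>x. R < norm x \<Longrightarrow> w x = 0"
  shows integrable_difference_quotient: "(\<lambda>x. (w (x + c) - w x) / t) integrable_on UNIV"
    and integral_difference_quotient: "integral UNIV (\<lambda>x. (w (x + c) - w x) / t) = 0"
proof -
  have "w (x + c) = 0" if "R + norm c < norm x" for x
    using w(2) norm_triangle_sub[of x "x + c"] that by (simp add: norm_minus_commute)
  then have shifted: "(\<lambda>x. w (x + c)) integrable_on UNIV"
    by (intro integrable_zero_outside_ball[of _ "R + norm c"])
      (auto intro!: continuous_on_compose2[OF w(1)] continuous_intros)
  have unshifted: "w integrable_on UNIV" by (rule integrable_zero_outside_ball[OF w])
  have Q: "(\<lambda>x. (w (x + c) - w x) / t) = (\<lambda>x. (1/t) *\<^sub>R (w (x + c) - w x))"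
    by (simp add: divide_inverse mult.commute)
  show "(\<lambda>x. (w (x + c) - w x) / t) integrable_on UNIV"
    unfolding Q by (intro integrable_cmul integrable_diff shifted unshifted)
  show "integral UNIV (\<lambda>x. (w (x + c) - w x) / t) = 0"
    unfolding Q using integral_translate_zero_outside_ball[OF w]
    by (simp add: integral_diff[OF shifted unshifted])
qed

lemma abs_integral_partial_le:
  fixes w :: "real^'n::finite \<Rightarrow> real" and a b :: "real^'n"
  assumes w: "C1 w" "\<And>x. R < norm x \<Longrightarrow> w x = 0" and "e > 0" and box: "cball 0 (R+1) \<subseteq> cbox a b"
  shows "\<bar>integral UNIV (partial i w)\<bar> \<le> e * Henstock_Kurzweil_Integration.content (cbox a b)"
proof -
  let ?e = "axis i 1 :: real^'n"
  have cont: "continuous_on UNIV (partial i w)" "continuous_on UNIV w"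
    using w(1) by (simp_all add: C1_continuous_on_partial C1_continuous_on)
  have zero: "R < norm x \<Longrightarrow> partial i w x = 0" for x by (rule partial_eq_0_outside_ball[OF w(2)])
  obtain d where d: "d > 0" "d \<le> 1" "\<And>x y. dist x y < d \<Longrightarrow> \<bar>partial i w x - partial i w y\<bar> < e"
    using uniformly_continuous_zero_outside_ball[OF cont(1) zero \<open>e > 0\<close>] by blast
  define t where "t = d / 2"
  have t: "0 < t" "t < d" "t \<le> 1" using d by (auto simp: t_def)
  define Q where "Q x = (w (x + t *\<^sub>R ?e) - w x) / t" for x
  have far: "R < norm (x + t *\<^sub>R ?e)" if "R + 1 < norm x" for x
    using norm_triangle_sub[of x "x + t *\<^sub>R ?e"] that t by (simp add: norm_minus_commute)
  have QI: "Q integrable_on UNIV" and Q0: "integral UNIV Q = 0"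
    unfolding Q_def[abs_def] using integrable_difference_quotient[OF cont(2) w(2)]
      integral_difference_quotient[OF cont(2) w(2)] by auto
  have DI: "partial i w integrable_on UNIV" by (rule integrable_zero_outside_ball[OF cont(1) zero])
  have pointwise: "\<bar>partial i w x - Q x\<bar> \<le> (if x \<in> cbox a b then e else 0)" for x
  proof (cases "x \<in> cbox a b")
    case True then show ?thesis
      using partial_close_to_difference_quotient[OF w(1) d(3) t(1,2)] by (simp add: Q_def less_imp_le)
  next
    case False
    then have "R + 1 < norm x" using box by (meson mem_cball_0 not_le subsetD)
    then show ?thesis using False w(2) far zero by (simp add: Q_def)
  qed
  have "\<bar>integral UNIV (partial i w)\<bar> = \<bar>integral UNIV (\<lambda>x. partial i w x - Q x)\<bar>"
    using integral_diff[OF DI QI] Q0 by simp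
  also have "\<dots> \<le> integral UNIV (\<lambda>x. if x \<in> cbox a b then e else 0)"
  proof -
    have "(\<lambda>x. if x \<in> cbox a b then e else 0) integrable_on UNIV"
      using integrable_restrict_UNIV[of "cbox a b" "\<lambda>x. e"] by (simp add: integrable_const)
    from integral_norm_bound_integral[OF integrable_diff[OF DI QI] this] pointwise
    show ?thesis by simp
  qed
  also have "\<dots> = e * Henstock_Kurzweil_Integration.content (cbox a b)"
    using integral_restrict_UNIV[of "cbox a b" "\<lambda>x. e"] by simp
  finally show ?thesis .
qed

lemma integral_partial_eq_0:
  fixes w :: "real^'n::finite \<Rightarrow> real"
  assumes "C1 w" "\<And>x. R < norm x \<Longrightarrow> w x = 0"
  shows "integral UNIV (partial i w) = 0"
proof (rule ccontr)
  obtain a b :: "real^'n" where box: "cball 0 (R+1) \<subseteq> cbox a b"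
    using bounded_subset_cbox_symmetric[OF bounded_cball] by blast
  define I where "I = \<bar>integral UNIV (partial i w)\<bar>"
  define c where "c = Henstock_Kurzweil_Integration.content (cbox a b)"
  assume "integral UNIV (partial i w) \<noteq> 0"
  moreover have "0 \<le> c" by (simp add: c_def)
  ultimately have pos: "0 < I / (c + 1)" "0 \<le> c" by (simp_all add: I_def)
  have "I \<le> I / (c + 1) * c"
    using abs_integral_partial_le[OF assms pos(1) box] by (simp add: I_def c_def)
  also have "\<dots> < I / (c + 1) * (c + 1)" by (rule mult_strict_left_mono) (use pos in auto)
  also have "\<dots> = I" using pos(2) by simp
  finally show False by simp
qed

lemma integral_divergence_eq_0:
  fixes \<psi> :: "real^'n::finite \<Rightarrow> real"
  assumes \<psi>: "C1 \<psi>" "\<And>x. R < norm x \<Longrightarrow> \<psi> x = 0" and F: "\<And>j. C1 (F j)"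
  shows "integral UNIV (\<lambda>x. \<Sum>j\<in>UNIV. partial j \<psi> x * F j x + \<psi> x * partial j (F j) x) = 0"
proof -
  have "integral UNIV (\<lambda>x. partial j \<psi> x * F j x + \<psi> x * partial j (F j) x) = 0" for j
  proof -
    have "partial j (\<lambda>x. \<psi> x * F j x) = (\<lambda>x. partial j \<psi> x * F j x + \<psi> x * partial j (F j) x)"
      using partial_mult[OF \<psi>(1) F] by blast
    moreover have "integral UNIV (partial j (\<lambda>x. \<psi> x * F j x)) = 0"
      by (rule integral_partial_eq_0[of _ R]) (use C1_mult[OF \<psi>(1) F] \<psi>(2) in auto)
    ultimately show ?thesis by simp
  qed
  moreover have "(\<lambda>x. partial j \<psi> x * F j x + \<psi> x * partial j (F j) x) integrable_on UNIV" for j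
    using \<psi> F partial_eq_0_outside_ball[OF \<psi>(2)]
    by (intro integrable_zero_outside_ball[of _ R] continuous_intros C1_continuous_on
        C1_continuous_on_partial) auto
  ultimately show ?thesis by (simp add: integral_sum)
qed

section \<open>A \<open>C\<^sup>1\<close> cutoff adapted to the domain\<close>

definition clamp :: "real \<Rightarrow> real" where
  "clamp t = max (-1) (min 0 t)"

definition cutoff :: "real \<Rightarrow> real" where
  "cutoff t = (clamp t)\<^sup>2 * (2 * clamp t + 3)"

definition cutoff' :: "real \<Rightarrow> real" where
  "cutoff' t = 6 * clamp t * (clamp t + 1)"

lemma continuous_on_cutoff: "continuous_on UNIV cutoff"
  and continuous_on_cutoff': "continuous_on UNIV cutoff'"
  unfolding cutoff_def cutoff'_def clamp_def by (intro continuous_intros)+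

lemma cutoff_eq_1: "t \<le> -1 \<Longrightarrow> cutoff t = 1"
  and cutoff_eq_0: "0 \<le> t \<Longrightarrow> cutoff t = 0"
  and cutoff'_eq_0: "t \<le> -1 \<or> 0 \<le> t \<Longrightarrow> cutoff' t = 0"
  by (auto simp: cutoff_def cutoff'_def clamp_def)

lemma has_real_derivative_split:
  assumes "(f has_real_derivative D) (at x within {..x})" "(f has_real_derivative D) (at x within {x..})"
  shows "(f has_real_derivative D) (at x)"
proof -
  have "((\<lambda>y. (f y - f x) / (y - x)) \<longlongrightarrow> D) (at x within {..x} \<union> {x..})"
    using assms by (simp add: Lim_within_Un has_field_derivative_iff)
  moreover have "{..x} \<union> {x..} = UNIV" by auto
  ultimately show ?thesis by (simp add: has_field_derivative_iff)
qed

lemma cutoff_eq_cubic: "-1 \<le> s \<Longrightarrow> s \<le> 0 \<Longrightarrow> cutoff s = s\<^sup>2 * (2 * s + 3)"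
  and cutoff'_eq_cubic': "-1 \<le> s \<Longrightarrow> s \<le> 0 \<Longrightarrow> cutoff' s = 6 * s * (s + 1)"
  by (simp_all add: cutoff_def cutoff'_def clamp_def)

lemma has_real_derivative_cutoff: "(cutoff has_real_derivative cutoff' t) (at t)"
proof -
  let ?g = "\<lambda>s. s\<^sup>2 * (2 * s + 3)"
  note cubic_on = cutoff_eq_cubic cutoff'_eq_cubic'
  have cubic: "(?g has_real_derivative cutoff' t) (at t within S)" if "-1 \<le> t" "t \<le> 0" for S
    using cutoff'_eq_cubic'[OF that] by (auto intro!: derivative_eq_intros simp: algebra_simps power2_eq_square)
  consider "t < -1" | "t = -1" | "-1 < t \<and> t < 0" | "t = 0" | "0 < t" by linarith
  then show ?thesis
  proof cases
    case 1
    show ?thesis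
      by (rule has_field_derivative_transform_within_open[of "\<lambda>_. 1" _ _ "{..<-1}"])
         (use 1 in \<open>auto simp: cutoff_eq_1 cutoff'_eq_0\<close>)
  next
    case 2
    show ?thesis
    proof (rule has_real_derivative_split)
      show "(cutoff has_real_derivative cutoff' t) (at t within {..t})"
        by (rule has_field_derivative_transform_within[of "\<lambda>_. 1" _ _ _ 1])
           (use 2 in \<open>auto simp: cutoff_eq_1 cutoff'_eq_0\<close>)
      show "(cutoff has_real_derivative cutoff' t) (at t within {t..})"
        by (rule has_field_derivative_transform_within[of ?g _ _ _ 1])
          (use 2 cubic cubic_on in \<open>auto simp: dist_real_def\<close>)
    qed
  next
    case 3
    show ?thesis
      by (rule has_field_derivative_transform_within_open[of ?g _ _ "{-1<..<0}"])
         (use 3 cubic cubic_on in auto)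
  next
    case 4
    show ?thesis
    proof (rule has_real_derivative_split)
      show "(cutoff has_real_derivative cutoff' t) (at t within {..t})"
        by (rule has_field_derivative_transform_within[of ?g _ _ _ 1])
          (use 4 cubic cubic_on in \<open>auto simp: dist_real_def\<close>)
      show "(cutoff has_real_derivative cutoff' t) (at t within {t..})"
        by (rule has_field_derivative_transform_within[of "\<lambda>_. 0" _ _ _ 1])
           (use 4 in \<open>auto simp: cutoff_eq_0 cutoff'_eq_0\<close>)
    qed
  next
    case 5
    show ?thesis
      by (rule has_field_derivative_transform_within_open[of "\<lambda>_. 0" _ _ "{0<..}"])
         (use 5 in \<open>auto simp: cutoff_eq_0 cutoff'_eq_0\<close>)
  qed
qed

lemma cutoff_nonneg: "0 \<le> cutoff t"
  and cutoff_le_1: "cutoff t \<le> 1"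
  and cutoff'_nonpos: "cutoff' t \<le> 0"
proof -
  have c: "-1 \<le> clamp t" "clamp t \<le> 0" by (auto simp: clamp_def)
  show "0 \<le> cutoff t" using c unfolding cutoff_def by (intro mult_nonneg_nonneg) auto
  have "0 \<le> (clamp t + 1)\<^sup>2 * (1 - 2 * clamp t)" using c by (intro mult_nonneg_nonneg) auto
  then show "cutoff t \<le> 1" by (simp add: cutoff_def algebra_simps power2_eq_square)
  have "0 \<le> (- clamp t) * (clamp t + 1)" using c by (intro mult_nonneg_nonneg) auto
  then show "cutoff' t \<le> 0" by (simp add: cutoff'_def algebra_simps)
qed

lemma
  assumes "C1 \<rho>"
  shows C1_cutoff_compose: "C1 (\<lambda>x. cutoff (\<rho> x / \<epsilon>))"
    and partial_cutoff_compose: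
      "partial j (\<lambda>x. cutoff (\<rho> x / \<epsilon>)) x = cutoff' (\<rho> x / \<epsilon>) / \<epsilon> * partial j \<rho> x"
proof -
  have scaled: "C1 (\<lambda>x. \<rho> x * inverse \<epsilon>)" "partial j (\<lambda>x. \<rho> x * inverse \<epsilon>) x = partial j \<rho> x * inverse \<epsilon>"
    using C1_mult[OF assms C1_const] partial_mult[OF assms C1_const[of "inverse \<epsilon>"], of j x]
      partial_const[of j "inverse \<epsilon>" x] by auto
  show "C1 (\<lambda>x. cutoff (\<rho> x / \<epsilon>))"
    using C1_compose[OF scaled(1) has_real_derivative_cutoff continuous_on_cutoff']
    by (simp add: divide_inverse)
  show "partial j (\<lambda>x. cutoff (\<rho> x / \<epsilon>)) x = cutoff' (\<rho> x / \<epsilon>) / \<epsilon> * partial j \<rho> x"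
    using partial_compose[OF scaled(1) has_real_derivative_cutoff continuous_on_cutoff'] scaled(2)
    by (simp add: divide_inverse mult_ac)
qed

lemma
  fixes \<rho> f :: "real^'n::finite \<Rightarrow> real"
  assumes \<rho>: "continuous_on UNIV \<rho>" "\<And>x. R < norm x \<Longrightarrow> 0 \<le> \<rho> x"
    and f: "continuous_on UNIV f" and "\<epsilon> > 0"
  shows integrable_cutoff_mult: "(\<lambda>x. cutoff (\<rho> x / \<epsilon>) * f x) integrable_on UNIV"
    and integrable_cutoff'_mult: "(\<lambda>x. cutoff' (\<rho> x / \<epsilon>) / \<epsilon> * f x) integrable_on UNIV"
proof -
  have cont: "continuous_on UNIV (\<lambda>x. \<rho> x / \<epsilon>)" using \<rho>(1) \<open>\<epsilon> > 0\<close> by (intro continuous_intros) auto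
  have out: "0 \<le> \<rho> x / \<epsilon>" if "R < norm x" for x using \<rho>(2)[OF that] \<open>\<epsilon> > 0\<close> by simp
  show "(\<lambda>x. cutoff (\<rho> x / \<epsilon>) * f x) integrable_on UNIV"
    by (rule integrable_zero_outside_ball[of _ R])
      (use f out in \<open>auto intro!: continuous_intros continuous_on_compose2[OF continuous_on_cutoff cont]
          cutoff_eq_0\<close>)
  show "(\<lambda>x. cutoff' (\<rho> x / \<epsilon>) / \<epsilon> * f x) integrable_on UNIV"
    by (rule integrable_zero_outside_ball[of _ R])
      (use f out \<open>\<epsilon> > 0\<close> in \<open>auto intro!: continuous_intros continuous_on_compose2[OF continuous_on_cutoff' cont]
          cutoff'_eq_0\<close>)
qed

lemma integral_cutoff_mult_lower_bound:
  fixes \<rho> P :: "real^'n::finite \<Rightarrow> real"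
  assumes \<rho>: "continuous_on UNIV \<rho>" "\<And>x. R < norm x \<Longrightarrow> 0 \<le> \<rho> x" "\<rho> z < 0"
    and P: "continuous_on UNIV P" "\<And>x. 0 \<le> P x" "0 < P z"
  obtains m \<epsilon>0 where "0 < m" "0 < \<epsilon>0"
    "\<And>\<epsilon>. 0 < \<epsilon> \<Longrightarrow> \<epsilon> \<le> \<epsilon>0 \<Longrightarrow> m \<le> integral UNIV (\<lambda>x. cutoff (\<rho> x / \<epsilon>) * P x)"
proof -
  define U where "U = {y. P z / 2 < P y} \<inter> {y. \<rho> y < \<rho> z / 2}"
  have "open U" unfolding U_def
    by (intro open_Int open_Collect_less) (auto intro: P(1) \<rho>(1) continuous_intros)
  moreover have "z \<in> U" using P(3) \<rho>(3) by (simp add: U_def)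
  ultimately obtain a b where ab: "cbox a b \<subseteq> U" "\<forall>i\<in>Basis. a \<bullet> i < b \<bullet> i"
    using open_contains_cbox by metis
  show ?thesis
  proof (rule that)
    show "0 < Henstock_Kurzweil_Integration.content (cbox a b) * (P z / 2)"
      using content_pos_lt[OF ab(2)] P(3) by simp
    show "0 < - \<rho> z / 2" using \<rho>(3) by simp
    fix \<epsilon> assume \<epsilon>: "0 < \<epsilon>" "\<epsilon> \<le> - \<rho> z / 2"
    let ?f = "\<lambda>x. cutoff (\<rho> x / \<epsilon>) * P x"
    have fI: "?f integrable_on UNIV" by (rule integrable_cutoff_mult[OF \<rho>(1,2) P(1) \<epsilon>(1)])
    have "P z / 2 \<le> ?f y" if y: "y \<in> cbox a b" for y
    proof -
      have "P z / 2 < P y" "\<rho> y < \<rho> z / 2" using ab(1) y by (auto simp: U_def)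
      moreover from this have "\<rho> y / \<epsilon> \<le> -1" using \<epsilon> by (simp add: field_simps)
      ultimately show ?thesis by (simp add: cutoff_eq_1)
    qed
    then have "integral (cbox a b) (\<lambda>y. P z / 2) \<le> integral (cbox a b) ?f"
      by (intro integral_le integrable_const integrable_on_subcbox[OF fI]) auto
    then have "Henstock_Kurzweil_Integration.content (cbox a b) * (P z / 2) \<le> integral (cbox a b) ?f"
      by simp
    also have "\<dots> \<le> integral UNIV ?f"
      by (rule integral_subset_le) (auto intro: mult_nonneg_nonneg P(2) cutoff_nonneg integrable_on_subcbox[OF fI] fI)
    finally show "Henstock_Kurzweil_Integration.content (cbox a b) * (P z / 2) \<le> integral UNIV ?f" .
  qed
qed

lemma integral_cutoff_mult_upper_bound:
  fixes \<rho> L :: "real^'n::finite \<Rightarrow> real"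
  assumes \<rho>: "continuous_on UNIV \<rho>" "\<And>x. R < norm x \<Longrightarrow> 0 \<le> \<rho> x" and L: "continuous_on UNIV L"
  obtains K where "\<And>\<epsilon>. 0 < \<epsilon> \<Longrightarrow> integral UNIV (\<lambda>x. cutoff (\<rho> x / \<epsilon>) * L x) \<le> K"
proof -
  obtain a b :: "real^'n" where box: "cball 0 R \<subseteq> cbox a b"
    using bounded_subset_cbox_symmetric[OF bounded_cball] by blast
  let ?g = "\<lambda>x. if x \<in> cbox a b then \<bar>L x\<bar> else 0"
  have "continuous_on UNIV (\<lambda>x. \<bar>L x\<bar>)" using L by (intro continuous_intros)
  then have "(\<lambda>x. \<bar>L x\<bar>) integrable_on cbox a b"
    by (rule integrable_continuous[OF continuous_on_subset[OF _ subset_UNIV]])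
  then have gI: "?g integrable_on UNIV" by (simp add: integrable_restrict_UNIV)
  have pointwise: "cutoff (\<rho> x / \<epsilon>) * L x \<le> ?g x" if "0 < \<epsilon>" for x \<epsilon>
  proof (cases "x \<in> cbox a b")
    case True
    have "cutoff (\<rho> x / \<epsilon>) * L x \<le> cutoff (\<rho> x / \<epsilon>) * \<bar>L x\<bar>"
      by (rule mult_left_mono) (simp_all add: cutoff_nonneg)
    also have "\<dots> \<le> \<bar>L x\<bar>" by (rule mult_left_le_one_le) (simp_all add: cutoff_nonneg cutoff_le_1)
    finally show ?thesis using True by simp
  next
    case False
    then have "R < norm x" using box by (meson mem_cball_0 not_le subsetD)
    then have "0 \<le> \<rho> x / \<epsilon>" using \<rho>(2) that by simp
    then show ?thesis using False by (simp add: cutoff_eq_0)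
  qed
  have "integral UNIV (\<lambda>x. cutoff (\<rho> x / \<epsilon>) * L x) \<le> integral (cbox a b) (\<lambda>x. \<bar>L x\<bar>)"
    if "0 < \<epsilon>" for \<epsilon>
    using integral_le[OF integrable_cutoff_mult[OF \<rho> L that] gI pointwise[OF that]]
    by (simp add: integral_restrict_UNIV)
  then show ?thesis using that by blast
qed

section \<open>Neumann eigenvalues of the Laplacian are real\<close>

lemma neumann_fun_C1: "neumann_fun \<Omega> \<rho> w \<Longrightarrow> C1 w"
  by (metis Ck_Suc_imp_C1 neumann_fun_def numeral_2_eq_2)

lemma neumann_fun_C1_partial: "neumann_fun \<Omega> \<rho> w \<Longrightarrow> C1 (partial j w)"
  unfolding neumann_fun_def by (rule Ck_2_imp_C1_partial) simp

lemma smooth_fun_C1: "smooth_fun \<rho> \<Longrightarrow> C1 \<rho>"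
  and smooth_fun_C1_partial: "smooth_fun \<rho> \<Longrightarrow> C1 (partial j \<rho>)"
  unfolding smooth_fun_def by (meson Ck_Suc_imp_C1 Ck_2_imp_C1_partial)+

lemma smooth_domain_frontier:
  assumes "smooth_domain \<Omega> \<rho>" "x \<in> frontier \<Omega>"
  shows "\<rho> x = 0" and "grad \<rho> x \<noteq> 0" and "0 < (\<Sum>j\<in>UNIV. partial j \<rho> x * partial j \<rho> x)"
proof -
  have \<Omega>: "\<Omega> = {x. \<rho> x < 0}" and \<rho>: "continuous_on UNIV \<rho>"
    using assms(1) smooth_fun_C1 C1_continuous_on by (auto simp: smooth_domain_def)
  have "open \<Omega>" unfolding \<Omega> by (rule open_Collect_less) (auto intro: \<rho> continuous_intros)
  then have "x \<notin> \<Omega>" using assms(2) by (simp add: frontier_def interior_open)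
  have "closure \<Omega> \<subseteq> {x. \<rho> x \<le> 0}"
    by (rule closure_minimal) (auto simp: \<Omega> intro: closed_Collect_le \<rho> continuous_intros)
  with \<open>x \<notin> \<Omega>\<close> have "\<rho> x \<le> 0" "\<not> \<rho> x < 0"
    using assms(2) by (auto simp: frontier_def \<Omega>)
  then show "\<rho> x = 0" by simp
  with assms(1) show "grad \<rho> x \<noteq> 0" by (simp add: smooth_domain_def)
  then obtain j where "partial j \<rho> x \<noteq> 0" by (auto simp: grad_def vec_eq_iff)
  then show "0 < (\<Sum>j\<in>UNIV. partial j \<rho> x * partial j \<rho> x)"
    by (intro sum_pos2[of _ j]) (auto simp: zero_less_mult_iff)
qed

lemma neumann_fun_normal_derivative:
  fixes w :: "real^'n::finite \<Rightarrow> real"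
  assumes "neumann_fun \<Omega> \<rho> w" "x \<in> frontier \<Omega>" "grad \<rho> x \<noteq> 0"
  shows "(\<Sum>j\<in>UNIV. partial j \<rho> x * partial j w x) = 0"
proof -
  define F where "F = frechet_derivative w (at x)"
  have lin: "linear F"
    unfolding F_def by (rule has_derivative_linear[OF C1_has_derivative[OF neumann_fun_C1[OF assms(1)]]])
  have "F (outer_normal \<rho> x) = 0" using assms(1,2) unfolding neumann_fun_def F_def by auto
  then have "F (grad \<rho> x) = 0"
    using assms(3) linear_scale[OF lin] by (simp add: outer_normal_def)
  moreover have "F (grad \<rho> x) = (\<Sum>j\<in>UNIV. (grad \<rho> x $ j) * F (axis j 1))"
  proof -
    have "grad \<rho> x = (\<Sum>j\<in>UNIV. (grad \<rho> x $ j) *\<^sub>R axis j 1)"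
      using basis_expansion[of "grad \<rho> x"] by (simp add: scalar_mult_eq_scaleR)
    then have "F (grad \<rho> x) = F (\<Sum>j\<in>UNIV. (grad \<rho> x $ j) *\<^sub>R axis j 1)"
      by (rule arg_cong)
    also have "\<dots> = (\<Sum>j\<in>UNIV. F ((grad \<rho> x $ j) *\<^sub>R axis j 1))" by (rule linear_sum[OF lin])
    finally show ?thesis by (simp add: linear_scale[OF lin])
  qed
  ultimately show ?thesis by (simp add: grad_def partial_def F_def)
qed

lemma neumann_cross_flux_frontier:
  fixes p q :: "real^'n::finite \<Rightarrow> real"
  assumes "smooth_domain \<Omega> \<rho>" "neumann_fun \<Omega> \<rho> p" "neumann_fun \<Omega> \<rho> q" "x \<in> frontier \<Omega>"
  shows "(\<Sum>j\<in>UNIV. partial j \<rho> x * (p x * partial j q x - q x * partial j p x)) = 0"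
proof -
  have grad: "grad \<rho> x \<noteq> 0" by (rule smooth_domain_frontier(2)[OF assms(1,4)])
  have "(\<Sum>j\<in>UNIV. partial j \<rho> x * (p x * partial j q x - q x * partial j p x))
      = p x * (\<Sum>j\<in>UNIV. partial j \<rho> x * partial j q x) - q x * (\<Sum>j\<in>UNIV. partial j \<rho> x * partial j p x)"
    by (simp add: sum_subtractf sum_distrib_left algebra_simps)
  then show ?thesis
    using neumann_fun_normal_derivative[OF assms(2,4) grad] neumann_fun_normal_derivative[OF assms(3,4) grad]
    by simp
qed

lemma boundary_layer_estimate:
  fixes \<Omega> :: "(real^'n::finite) set" and \<rho> G N :: "real^'n \<Rightarrow> real"
  assumes \<Omega>: "bounded \<Omega>" "\<Omega> = {x. \<rho> x < 0}"
    and cont: "continuous_on UNIV \<rho>" "continuous_on UNIV G" "continuous_on UNIV N"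
    and frontier: "\<And>x. x \<in> frontier \<Omega> \<Longrightarrow> G x = 0 \<and> 0 < N x" and "0 < \<eta>"
  obtains \<epsilon> where "0 < \<epsilon>" "\<And>x. x \<in> \<Omega> \<Longrightarrow> - \<epsilon> < \<rho> x \<Longrightarrow> \<bar>G x\<bar> \<le> \<eta> * N x"
proof -
  define K where "K = closure \<Omega> \<inter> {x. \<eta> * N x \<le> \<bar>G x\<bar>}"
  have "closed K" unfolding K_def
    by (intro closed_Int closed_closure closed_Collect_le) (auto intro: cont continuous_intros)
  moreover have "bounded K" unfolding K_def using \<Omega>(1) by (meson bounded_closure bounded_subset inf_le1)
  ultimately have "compact K" by (simp add: compact_eq_bounded_closed)
  have outside: "\<bar>G x\<bar> \<le> \<eta> * N x" if "x \<in> \<Omega>" "x \<notin> K" for x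
    using that closure_subset by (force simp: K_def)
  show ?thesis
  proof (cases "K = {}")
    case True
    show ?thesis by (rule that[of 1]) (use True outside in auto)
  next
    case False
    obtain x1 where x1: "x1 \<in> K" "\<And>y. y \<in> K \<Longrightarrow> \<rho> y \<le> \<rho> x1"
      using continuous_attains_sup[OF \<open>compact K\<close> False continuous_on_subset[OF cont(1)]] by auto
    have "open \<Omega>" unfolding \<Omega>(2) by (rule open_Collect_less) (auto intro: cont continuous_intros)
    have "x1 \<notin> frontier \<Omega>"
      using frontier[of x1] x1(1) mult_pos_pos[OF \<open>0 < \<eta>\<close>, of "N x1"] by (auto simp: K_def)
    then have "x1 \<in> \<Omega>" using x1(1) \<open>open \<Omega>\<close> by (auto simp: K_def frontier_def interior_open)
    show ?thesis
    proof (rule that[of "- \<rho> x1"])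
      show "0 < - \<rho> x1" using \<open>x1 \<in> \<Omega>\<close> \<Omega>(2) by simp
      show "\<bar>G x\<bar> \<le> \<eta> * N x" if "x \<in> \<Omega>" "- (- \<rho> x1) < \<rho> x" for x
        using outside[OF that(1)] x1(2)[of x] that(2) by linarith
    qed
  qed
qed

lemma eq_0_by_cutoff_estimates:
  fixes A C :: "real \<Rightarrow> real"
  assumes lower: "0 < m" "0 < \<epsilon>0" "\<And>\<epsilon>. 0 < \<epsilon> \<Longrightarrow> \<epsilon> \<le> \<epsilon>0 \<Longrightarrow> m \<le> A \<epsilon>"
    and upper: "\<And>\<epsilon>. 0 < \<epsilon> \<Longrightarrow> C \<epsilon> \<le> K"
    and small: "\<And>\<eta>. 0 < \<eta> \<Longrightarrow> \<exists>\<epsilon>1>0. \<forall>\<epsilon>. 0 < \<epsilon> \<and> \<epsilon> \<le> \<epsilon>1 \<longrightarrow> \<bar>b * A \<epsilon>\<bar> \<le> \<eta> * C \<epsilon>"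
  shows "b = 0"
proof (rule ccontr)
  assume "b \<noteq> 0"
  define \<eta> where "\<eta> = \<bar>b\<bar> * m / 2 / (\<bar>K\<bar> + 1)"
  have "0 < \<eta>" using \<open>b \<noteq> 0\<close> lower(1) by (simp add: \<eta>_def)
  then obtain \<epsilon>1 where \<epsilon>1: "0 < \<epsilon>1" "\<forall>\<epsilon>. 0 < \<epsilon> \<and> \<epsilon> \<le> \<epsilon>1 \<longrightarrow> \<bar>b * A \<epsilon>\<bar> \<le> \<eta> * C \<epsilon>"
    using small by blast
  define \<epsilon> where "\<epsilon> = min \<epsilon>0 \<epsilon>1"
  have \<epsilon>: "0 < \<epsilon>" "\<epsilon> \<le> \<epsilon>0" "\<epsilon> \<le> \<epsilon>1" using lower(2) \<epsilon>1(1) by (auto simp: \<epsilon>_def)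
  have "m \<le> \<bar>A \<epsilon>\<bar>" using lower(3)[OF \<epsilon>(1,2)] by linarith
  then have "\<bar>b\<bar> * m \<le> \<bar>b * A \<epsilon>\<bar>" by (simp add: abs_mult mult_left_mono)
  also have "\<dots> \<le> \<eta> * C \<epsilon>" using \<epsilon>1(2) \<epsilon>(1,3) by blast
  also have "\<dots> \<le> \<eta> * \<bar>K\<bar>" using upper[OF \<epsilon>(1)] \<open>0 < \<eta>\<close> by (simp add: mult_left_mono)
  also have "\<dots> < \<eta> * (\<bar>K\<bar> + 1)" using \<open>0 < \<eta>\<close> by simp
  also have "\<dots> = \<bar>b\<bar> * m / 2"
    using abs_ge_zero[of K] by (simp add: \<eta>_def field_simps)
  also have "\<dots> < \<bar>b\<bar> * m" using \<open>b \<noteq> 0\<close> lower(1) by simp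
  finally have "\<bar>b\<bar> * m < \<bar>b\<bar> * m" .
  then show False by simp
qed

lemma integral_cutoff_flux:
  fixes \<rho> :: "real^'n::finite \<Rightarrow> real" and F :: "'n \<Rightarrow> real^'n \<Rightarrow> real"
  assumes \<rho>: "C1 \<rho>" "\<And>x. R < norm x \<Longrightarrow> 0 \<le> \<rho> x" and F: "\<And>j. C1 (F j)" and "0 < \<epsilon>"
  shows "integral UNIV (\<lambda>x. cutoff' (\<rho> x / \<epsilon>) / \<epsilon> * (\<Sum>j\<in>UNIV. partial j \<rho> x * F j x))
    = - integral UNIV (\<lambda>x. cutoff (\<rho> x / \<epsilon>) * (\<Sum>j\<in>UNIV. partial j (F j) x))"
proof -
  let ?flux = "\<lambda>x. cutoff' (\<rho> x / \<epsilon>) / \<epsilon> * (\<Sum>j\<in>UNIV. partial j \<rho> x * F j x)"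
  let ?div = "\<lambda>x. cutoff (\<rho> x / \<epsilon>) * (\<Sum>j\<in>UNIV. partial j (F j) x)"
  have \<psi>0: "cutoff (\<rho> x / \<epsilon>) = 0" if "R < norm x" for x
    using \<rho>(2)[OF that] \<open>0 < \<epsilon>\<close> by (simp add: cutoff_eq_0)
  have "integral UNIV (\<lambda>x. \<Sum>j\<in>UNIV. partial j (\<lambda>x. cutoff (\<rho> x / \<epsilon>)) x * F j x
      + cutoff (\<rho> x / \<epsilon>) * partial j (F j) x) = 0"
    by (rule integral_divergence_eq_0[OF C1_cutoff_compose[OF \<rho>(1)] \<psi>0 F])
  moreover have "(\<Sum>j\<in>UNIV. partial j (\<lambda>x. cutoff (\<rho> x / \<epsilon>)) x * F j x
      + cutoff (\<rho> x / \<epsilon>) * partial j (F j) x) = ?flux x + ?div x" for x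
    by (simp add: partial_cutoff_compose[OF \<rho>(1)] sum.distrib sum_distrib_left mult.assoc)
  moreover have "continuous_on UNIV (\<lambda>x. \<Sum>j\<in>UNIV. partial j \<rho> x * F j x)"
    "continuous_on UNIV (\<lambda>x. \<Sum>j\<in>UNIV. partial j (F j) x)"
    using C1_continuous_on_partial[OF \<rho>(1)] C1_continuous_on[OF F] C1_continuous_on_partial[OF F]
    by (auto intro!: continuous_intros)
  then have "?flux integrable_on UNIV" "?div integrable_on UNIV"
    using integrable_cutoff'_mult integrable_cutoff_mult C1_continuous_on[OF \<rho>(1)] \<rho>(2) \<open>0 < \<epsilon>\<close>
    by blast+
  ultimately show ?thesis by (simp add: integral_add eq_neg_iff_add_eq_0)
qed

lemma abs_integral_cutoff'_mult_le:
  fixes \<rho> G N :: "real^'n::finite \<Rightarrow> real"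
  assumes \<rho>: "continuous_on UNIV \<rho>" "\<And>x. R < norm x \<Longrightarrow> 0 \<le> \<rho> x"
    and cont: "continuous_on UNIV G" "continuous_on UNIV N" and "0 < \<epsilon>"
    and near: "\<And>x. - \<epsilon> < \<rho> x \<Longrightarrow> \<rho> x < 0 \<Longrightarrow> \<bar>G x\<bar> \<le> \<eta> * N x"
  shows "\<bar>integral UNIV (\<lambda>x. cutoff' (\<rho> x / \<epsilon>) / \<epsilon> * G x)\<bar>
    \<le> \<eta> * - integral UNIV (\<lambda>x. cutoff' (\<rho> x / \<epsilon>) / \<epsilon> * N x)"
proof -
  have pointwise: "\<bar>cutoff' (\<rho> x / \<epsilon>) / \<epsilon> * G x\<bar> \<le> \<eta> * - (cutoff' (\<rho> x / \<epsilon>) / \<epsilon> * N x)" for x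
  proof (cases "- \<epsilon> < \<rho> x \<and> \<rho> x < 0")
    case True
    let ?c = "cutoff' (\<rho> x / \<epsilon>) / \<epsilon>"
    have "?c \<le> 0" using cutoff'_nonpos \<open>0 < \<epsilon>\<close> by (simp add: divide_nonpos_pos)
    then have "\<bar>?c * G x\<bar> = - ?c * \<bar>G x\<bar>" by (simp only: abs_mult abs_of_nonpos)
    also have "\<dots> \<le> - ?c * (\<eta> * N x)" using near True \<open>?c \<le> 0\<close> by (intro mult_left_mono) auto
    finally show ?thesis by (simp add: algebra_simps)
  next
    case False
    then have "\<rho> x / \<epsilon> \<le> -1 \<or> 0 \<le> \<rho> x / \<epsilon>" using \<open>0 < \<epsilon>\<close> by (auto simp: field_simps)
    then show ?thesis by (simp add: cutoff'_eq_0)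
  qed
  have "\<bar>integral UNIV (\<lambda>x. cutoff' (\<rho> x / \<epsilon>) / \<epsilon> * G x)\<bar>
      \<le> integral UNIV (\<lambda>x. \<eta> * - (cutoff' (\<rho> x / \<epsilon>) / \<epsilon> * N x))"
    using integral_norm_bound_integral[OF integrable_cutoff'_mult[OF \<rho> cont(1) \<open>0 < \<epsilon>\<close>]
        integrable_cmul[OF integrable_neg[OF integrable_cutoff'_mult[OF \<rho> cont(2) \<open>0 < \<epsilon>\<close>]]]]
      pointwise by simp
  then show ?thesis by simp
qed

lemma integral_cutoff'_mult_small:
  fixes \<Omega> :: "(real^'n::finite) set" and \<rho> G N :: "real^'n \<Rightarrow> real"
  assumes \<Omega>: "bounded \<Omega>" "\<Omega> = {x. \<rho> x < 0}" and \<rho>_out: "\<And>x. R < norm x \<Longrightarrow> 0 \<le> \<rho> x"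
    and cont: "continuous_on UNIV \<rho>" "continuous_on UNIV G" "continuous_on UNIV N"
    and frontier: "\<And>x. x \<in> frontier \<Omega> \<Longrightarrow> G x = 0 \<and> 0 < N x" and "0 < \<eta>"
  obtains \<epsilon>1 where "0 < \<epsilon>1" "\<And>\<epsilon>. 0 < \<epsilon> \<Longrightarrow> \<epsilon> \<le> \<epsilon>1 \<Longrightarrow>
    \<bar>integral UNIV (\<lambda>x. cutoff' (\<rho> x / \<epsilon>) / \<epsilon> * G x)\<bar>
      \<le> \<eta> * - integral UNIV (\<lambda>x. cutoff' (\<rho> x / \<epsilon>) / \<epsilon> * N x)"
proof -
  obtain \<epsilon>1 where \<epsilon>1: "0 < \<epsilon>1" "\<And>x. x \<in> \<Omega> \<Longrightarrow> - \<epsilon>1 < \<rho> x \<Longrightarrow> \<bar>G x\<bar> \<le> \<eta> * N x"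
    using boundary_layer_estimate[OF \<Omega> cont frontier \<open>0 < \<eta>\<close>] by blast
  show ?thesis
  proof (rule that[OF \<epsilon>1(1)])
    fix \<epsilon> :: real assume "0 < \<epsilon>" "\<epsilon> \<le> \<epsilon>1"
    then have "\<bar>G x\<bar> \<le> \<eta> * N x" if "- \<epsilon> < \<rho> x" "\<rho> x < 0" for x
      using \<epsilon>1(2) that \<Omega>(2) by simp
    from abs_integral_cutoff'_mult_le[OF cont(1) \<rho>_out cont(2,3) \<open>0 < \<epsilon>\<close> this]
    show "\<bar>integral UNIV (\<lambda>x. cutoff' (\<rho> x / \<epsilon>) / \<epsilon> * G x)\<bar>
      \<le> \<eta> * - integral UNIV (\<lambda>x. cutoff' (\<rho> x / \<epsilon>) / \<epsilon> * N x)" .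
  qed
qed

lemma
  assumes "C1 p" "C1 q" "\<And>j. C1 (partial j p)" "\<And>j. C1 (partial j q)"
  shows C1_cross_gradient: "C1 (\<lambda>x. p x * partial j q x - q x * partial j p x)"
    and sum_partial_cross_gradient:
      "(\<Sum>j\<in>UNIV. partial j (\<lambda>x. p x * partial j q x - q x * partial j p x) x)
         = p x * laplacian q x - q x * laplacian p x"
proof -
  show "C1 (\<lambda>x. p x * partial j q x - q x * partial j p x)"
    using assms by (intro C1_diff C1_mult)
  have "partial j (\<lambda>x. p x * partial j q x - q x * partial j p x) x
      = p x * partial j (partial j q) x - q x * partial j (partial j p) x" for j
    using assms by (simp add: partial_diff C1_mult partial_mult algebra_simps)
  then show "(\<Sum>j\<in>UNIV. partial j (\<lambda>x. p x * partial j q x - q x * partial j p x) x)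
      = p x * laplacian q x - q x * laplacian p x"
    by (simp add: laplacian_def sum_subtractf sum_distrib_left)
qed

lemma integral_cutoff_cross_flux:
  fixes p q :: "real^'n::finite \<Rightarrow> real"
  assumes \<rho>: "C1 \<rho>" "\<And>x. R < norm x \<Longrightarrow> 0 \<le> \<rho> x" and \<Omega>: "\<Omega> = {x. \<rho> x < 0}"
    and pq: "C1 p" "C1 q" "\<And>j. C1 (partial j p)" "\<And>j. C1 (partial j q)"
    and lp: "\<And>x. x \<in> \<Omega> \<Longrightarrow> laplacian p x = a * p x - b * q x"
    and lq: "\<And>x. x \<in> \<Omega> \<Longrightarrow> laplacian q x = b * p x + a * q x" and "0 < \<epsilon>"
  shows "integral UNIV (\<lambda>x. cutoff' (\<rho> x / \<epsilon>) / \<epsilon>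
      * (\<Sum>j\<in>UNIV. partial j \<rho> x * (p x * partial j q x - q x * partial j p x)))
    = - (b * integral UNIV (\<lambda>x. cutoff (\<rho> x / \<epsilon>) * (p x * p x + q x * q x)))"
proof -
  have pointwise: "cutoff (\<rho> x / \<epsilon>) * (\<Sum>j\<in>UNIV. partial j (\<lambda>x. p x * partial j q x - q x * partial j p x) x)
      = b * (cutoff (\<rho> x / \<epsilon>) * (p x * p x + q x * q x))" for x
  proof (cases "x \<in> \<Omega>")
    case True then show ?thesis
      unfolding sum_partial_cross_gradient[OF pq] by (simp add: lp lq algebra_simps)
  next
    case False then show ?thesis using \<Omega> \<open>0 < \<epsilon>\<close> by (simp add: cutoff_eq_0)
  qed
  show ?thesis
    using integral_cutoff_flux[where F = "\<lambda>j x. p x * partial j q x - q x * partial j p x",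
        OF \<rho> C1_cross_gradient[OF pq] \<open>0 < \<epsilon>\<close>]
    by (simp only: pointwise integral_mult_right)
qed

lemma smooth_domain_nonneg_outside_ball:
  assumes "smooth_domain \<Omega> \<rho>"
  obtains R where "\<And>x. R < norm x \<Longrightarrow> 0 \<le> \<rho> x"
proof -
  have "bounded \<Omega>" "\<Omega> = {x. \<rho> x < 0}" using assms unfolding smooth_domain_def by blast+
  moreover from this obtain R where "\<forall>x\<in>\<Omega>. norm x \<le> R" using bounded_iff by blast
  ultimately show ?thesis using that[of R] by (metis mem_Collect_eq not_le)
qed

lemma neumann_eigenpair_cutoff_estimate:
  fixes p q :: "real^'n::finite \<Rightarrow> real"
  assumes dom: "smooth_domain \<Omega> \<rho>" and \<rho>_out: "\<And>x. R < norm x \<Longrightarrow> 0 \<le> \<rho> x"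
    and np: "neumann_fun \<Omega> \<rho> p" and nq: "neumann_fun \<Omega> \<rho> q"
    and lp: "\<And>x. x \<in> \<Omega> \<Longrightarrow> laplacian p x = a * p x - b * q x"
    and lq: "\<And>x. x \<in> \<Omega> \<Longrightarrow> laplacian q x = b * p x + a * q x" and "0 < \<eta>"
  shows "\<exists>\<epsilon>1>0. \<forall>\<epsilon>. 0 < \<epsilon> \<and> \<epsilon> \<le> \<epsilon>1 \<longrightarrow>
    \<bar>b * integral UNIV (\<lambda>x. cutoff (\<rho> x / \<epsilon>) * (p x * p x + q x * q x))\<bar>
      \<le> \<eta> * - integral UNIV (\<lambda>x. cutoff' (\<rho> x / \<epsilon>) / \<epsilon> * (\<Sum>j\<in>UNIV. partial j \<rho> x * partial j \<rho> x))"
proof -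
  have \<Omega>: "bounded \<Omega>" "\<Omega> = {x. \<rho> x < 0}" and C\<rho>: "C1 \<rho>"
    using dom smooth_fun_C1 by (auto simp: smooth_domain_def)
  have pq: "C1 p" "C1 q" "\<And>j. C1 (partial j p)" "\<And>j. C1 (partial j q)"
    using np nq by (simp_all add: neumann_fun_C1 neumann_fun_C1_partial)
  define G where "G x = (\<Sum>j\<in>UNIV. partial j \<rho> x * (p x * partial j q x - q x * partial j p x))" for x
  define N where "N x = (\<Sum>j\<in>UNIV. partial j \<rho> x * partial j \<rho> x)" for x
  have cont: "continuous_on UNIV \<rho>" "continuous_on UNIV G" "continuous_on UNIV N"
    unfolding G_def N_def using C1_continuous_on[OF C\<rho>] C1_continuous_on_partial[OF C\<rho>]
      C1_continuous_on[OF pq(1)] C1_continuous_on[OF pq(2)] C1_continuous_on[OF pq(3)] C1_continuous_on[OF pq(4)]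
    by (auto intro!: continuous_intros)
  have "G x = 0 \<and> 0 < N x" if "x \<in> frontier \<Omega>" for x
    using neumann_cross_flux_frontier[OF dom np nq that] smooth_domain_frontier(3)[OF dom that]
    by (simp add: G_def N_def)
  from integral_cutoff'_mult_small[OF \<Omega> \<rho>_out cont this \<open>0 < \<eta>\<close>]
  obtain \<epsilon>1 where \<epsilon>1: "0 < \<epsilon>1" "\<And>\<epsilon>. 0 < \<epsilon> \<Longrightarrow> \<epsilon> \<le> \<epsilon>1 \<Longrightarrow>
      \<bar>integral UNIV (\<lambda>x. cutoff' (\<rho> x / \<epsilon>) / \<epsilon> * G x)\<bar>
        \<le> \<eta> * - integral UNIV (\<lambda>x. cutoff' (\<rho> x / \<epsilon>) / \<epsilon> * N x)"
    by blast
  show ?thesis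
  proof (intro exI[of _ \<epsilon>1] conjI allI impI \<epsilon>1(1))
    fix \<epsilon> :: real assume "0 < \<epsilon> \<and> \<epsilon> \<le> \<epsilon>1"
    then have \<epsilon>: "0 < \<epsilon>" "\<epsilon> \<le> \<epsilon>1" by simp_all
    have flux: "integral UNIV (\<lambda>x. cutoff' (\<rho> x / \<epsilon>) / \<epsilon> * G x)
        = - (b * integral UNIV (\<lambda>x. cutoff (\<rho> x / \<epsilon>) * (p x * p x + q x * q x)))"
      unfolding G_def by (rule integral_cutoff_cross_flux[OF C\<rho> \<rho>_out \<Omega>(2) pq lp lq \<epsilon>(1)])
    from \<epsilon>1(2)[OF \<epsilon>] show "\<bar>b * integral UNIV (\<lambda>x. cutoff (\<rho> x / \<epsilon>) * (p x * p x + q x * q x))\<bar>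
      \<le> \<eta> * - integral UNIV (\<lambda>x. cutoff' (\<rho> x / \<epsilon>) / \<epsilon> * (\<Sum>j\<in>UNIV. partial j \<rho> x * partial j \<rho> x))"
      unfolding flux abs_minus_cancel N_def .
  qed
qed

lemma neumann_eigenpair_imaginary_part_eq_0:
  fixes p q :: "real^'n::finite \<Rightarrow> real"
  assumes dom: "smooth_domain \<Omega> \<rho>" and np: "neumann_fun \<Omega> \<rho> p" and nq: "neumann_fun \<Omega> \<rho> q"
    and lp: "\<And>x. x \<in> \<Omega> \<Longrightarrow> laplacian p x = a * p x - b * q x"
    and lq: "\<And>x. x \<in> \<Omega> \<Longrightarrow> laplacian q x = b * p x + a * q x"
    and nz: "\<exists>x\<in>\<Omega>. p x \<noteq> 0 \<or> q x \<noteq> 0"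
  shows "b = 0"
proof -
  have \<Omega>: "\<Omega> = {x. \<rho> x < 0}" and C\<rho>: "C1 \<rho>" "\<And>j. C1 (partial j \<rho>)"
    using dom smooth_fun_C1 smooth_fun_C1_partial by (auto simp: smooth_domain_def)
  obtain R where \<rho>_out: "\<And>x. R < norm x \<Longrightarrow> 0 \<le> \<rho> x"
    using smooth_domain_nonneg_outside_ball[OF dom] by blast
  have cont: "continuous_on UNIV \<rho>" "continuous_on UNIV (\<lambda>x. p x * p x + q x * q x)"
    "continuous_on UNIV (laplacian \<rho>)"
    unfolding laplacian_def using C1_continuous_on[OF C\<rho>(1)] C1_continuous_on_partial[OF C\<rho>(2)]
      C1_continuous_on[OF neumann_fun_C1[OF np]] C1_continuous_on[OF neumann_fun_C1[OF nq]]
    by (auto intro!: continuous_intros)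
  obtain x0 where x0: "x0 \<in> \<Omega>" "p x0 \<noteq> 0 \<or> q x0 \<noteq> 0" using nz by blast
  obtain m \<epsilon>0 where lower: "0 < m" "0 < \<epsilon>0"
    "\<And>\<epsilon>. 0 < \<epsilon> \<Longrightarrow> \<epsilon> \<le> \<epsilon>0 \<Longrightarrow> m \<le> integral UNIV (\<lambda>x. cutoff (\<rho> x / \<epsilon>) * (p x * p x + q x * q x))"
    by (rule integral_cutoff_mult_lower_bound[OF cont(1) \<rho>_out _ cont(2), where z=x0])
      (use x0 \<Omega> in \<open>auto simp: sum_squares_gt_zero_iff\<close>)
  obtain K where upper:
    "\<And>\<epsilon>. 0 < \<epsilon> \<Longrightarrow> integral UNIV (\<lambda>x. cutoff (\<rho> x / \<epsilon>) * laplacian \<rho> x) \<le> K"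
    using integral_cutoff_mult_upper_bound[OF cont(1) \<rho>_out cont(3)] by blast
  show "b = 0"
  proof (rule eq_0_by_cutoff_estimates[OF lower, where K = K])
    show "- integral UNIV (\<lambda>x. cutoff' (\<rho> x / \<epsilon>) / \<epsilon> * (\<Sum>j\<in>UNIV. partial j \<rho> x * partial j \<rho> x)) \<le> K"
      if "0 < \<epsilon>" for \<epsilon>
      using integral_cutoff_flux[OF C\<rho>(1) \<rho>_out C\<rho>(2) that] upper[OF that] by (simp add: laplacian_def)
    show "\<exists>\<epsilon>1>0. \<forall>\<epsilon>. 0 < \<epsilon> \<and> \<epsilon> \<le> \<epsilon>1 \<longrightarrow>
        \<bar>b * integral UNIV (\<lambda>x. cutoff (\<rho> x / \<epsilon>) * (p x * p x + q x * q x))\<bar>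
        \<le> \<eta> * - integral UNIV (\<lambda>x. cutoff' (\<rho> x / \<epsilon>) / \<epsilon> * (\<Sum>j\<in>UNIV. partial j \<rho> x * partial j \<rho> x))"
      if "0 < \<eta>" for \<eta>
      by (rule neumann_eigenpair_cutoff_estimate[OF dom \<rho>_out np nq lp lq that])
  qed
qed

section \<open>Spectrum of the linearized operator\<close>

lemma Ck_linear:
  fixes w :: "real^'n::finite \<Rightarrow> 'a::real_normed_vector" and T :: "'a \<Rightarrow> 'b::real_normed_vector"
  assumes T: "bounded_linear T"
  shows "Ck k w UNIV \<Longrightarrow> Ck k (\<lambda>x. T (w x)) UNIV"
proof (induction k arbitrary: w)
  case 0 then show ?case using bounded_linear.continuous_on[OF T] by simp
next
  case (Suc k)
  then have c: "continuous_on UNIV w" and d: "\<And>x. w differentiable (at x)"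
    and p: "\<And>i. Ck k (partial i w) UNIV" by auto
  have "partial i (\<lambda>x. T (w x)) = (\<lambda>x. T (partial i w x))" for i
    using partial_linear[OF T d] by auto
  moreover have "(\<lambda>x. T (w x)) differentiable (at x)" for x
    using bounded_linear.has_derivative[OF T d[of x, unfolded frechet_derivative_works]] differentiableI by blast
  ultimately show ?case using bounded_linear.continuous_on[OF T c] Suc.IH[OF p] by simp
qed

lemma Ck_add:
  fixes w v :: "real^'n::finite \<Rightarrow> 'a::real_normed_vector"
  shows "Ck k w UNIV \<Longrightarrow> Ck k v UNIV \<Longrightarrow> Ck k (\<lambda>x. w x + v x) UNIV"
proof (induction k arbitrary: w v)
  case 0 then show ?case by (simp add: continuous_on_add)
next
  case (Suc k)
  then have c: "continuous_on UNIV w" "continuous_on UNIV v"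
    and d: "\<And>x. w differentiable (at x)" "\<And>x. v differentiable (at x)"
    and p: "\<And>i. Ck k (partial i w) UNIV" "\<And>i. Ck k (partial i v) UNIV" by auto
  have "partial i (\<lambda>x. w x + v x) = (\<lambda>x. partial i w x + partial i v x)" for i
    using partial_add[OF d(1) d(2)] by auto
  then show ?case using continuous_on_add[OF c] Suc.IH[OF p(1) p(2)] d by auto
qed

lemma Ck_2_differentiable:
  "Ck 2 w UNIV \<Longrightarrow> w differentiable (at x)" "Ck 2 w UNIV \<Longrightarrow> partial i w differentiable (at x)"
  by (auto simp: numeral_2_eq_2)

lemma
  fixes w :: "real^'n::finite \<Rightarrow> 'a::real_normed_vector" and T :: "'a \<Rightarrow> 'b::real_normed_vector"
  assumes T: "bounded_linear T" and w: "neumann_fun \<Omega> \<rho> w"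
  shows neumann_fun_linear: "neumann_fun \<Omega> \<rho> (\<lambda>x. T (w x))"
    and laplacian_linear: "laplacian (\<lambda>x. T (w x)) x = T (laplacian w x)"
proof -
  have C: "Ck 2 w UNIV" using w by (simp add: neumann_fun_def)
  have "frechet_derivative (\<lambda>x. T (w x)) (at x) = (\<lambda>h. T (frechet_derivative w (at x) h))" for x
    using Ck_2_differentiable(1)[OF C, of x, unfolded frechet_derivative_works]
    by (intro frechet_derivative_at[symmetric] bounded_linear.has_derivative[OF T])
  then show "neumann_fun \<Omega> \<rho> (\<lambda>x. T (w x))"
    using w Ck_linear[OF T C] by (simp add: neumann_fun_def linear_simps(3)[OF T])
  have "partial i (\<lambda>x. T (w x)) = (\<lambda>x. T (partial i w x))" for i
    using partial_linear[OF T Ck_2_differentiable(1)[OF C]] by auto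
  then show "laplacian (\<lambda>x. T (w x)) x = T (laplacian w x)"
    using partial_linear[OF T Ck_2_differentiable(2)[OF C]]
    by (simp add: laplacian_def linear_sum[OF bounded_linear.linear[OF T]])
qed

lemma
  fixes w v :: "real^'n::finite \<Rightarrow> 'a::real_normed_vector"
  assumes w: "neumann_fun \<Omega> \<rho> w" and v: "neumann_fun \<Omega> \<rho> v"
  shows neumann_fun_add: "neumann_fun \<Omega> \<rho> (\<lambda>x. w x + v x)"
    and laplacian_add: "laplacian (\<lambda>x. w x + v x) x = laplacian w x + laplacian v x"
proof -
  have C: "Ck 2 w UNIV" "Ck 2 v UNIV" using w v by (auto simp: neumann_fun_def)
  have "frechet_derivative (\<lambda>x. w x + v x) (at x)
      = (\<lambda>h. frechet_derivative w (at x) h + frechet_derivative v (at x) h)" for x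
    using Ck_2_differentiable(1)[OF C(1), of x] Ck_2_differentiable(1)[OF C(2), of x]
    by (intro frechet_derivative_at[symmetric] has_derivative_add) (simp_all add: frechet_derivative_works)
  then show "neumann_fun \<Omega> \<rho> (\<lambda>x. w x + v x)"
    using w v Ck_add[OF C] by (simp add: neumann_fun_def)
  have "partial i (\<lambda>x. w x + v x) = (\<lambda>x. partial i w x + partial i v x)" for i
    using partial_add[OF Ck_2_differentiable(1)[OF C(1)] Ck_2_differentiable(1)[OF C(2)]] by auto
  then show "laplacian (\<lambda>x. w x + v x) x = laplacian w x + laplacian v x"
    using partial_add[OF Ck_2_differentiable(2)[OF C(1)] Ck_2_differentiable(2)[OF C(2)]]
    by (simp add: laplacian_def sum.distrib)
qed

lemma
  fixes w1 w2 :: "real^'n::finite \<Rightarrow> complex"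
  assumes "neumann_fun \<Omega> \<rho> w1" "neumann_fun \<Omega> \<rho> w2"
  shows neumann_fun_lincomb: "neumann_fun \<Omega> \<rho> (\<lambda>x. a * w1 x + b * w2 x)"
    and laplacian_lincomb: "laplacian (\<lambda>x. a * w1 x + b * w2 x) x = a * laplacian w1 x + b * laplacian w2 x"
  using neumann_fun_add[OF neumann_fun_linear[OF bounded_linear_mult_right assms(1)]
      neumann_fun_linear[OF bounded_linear_mult_right assms(2)]]
    laplacian_add[OF neumann_fun_linear[OF bounded_linear_mult_right assms(1)]
      neumann_fun_linear[OF bounded_linear_mult_right assms(2)]]
    laplacian_linear[OF bounded_linear_mult_right assms(1)] laplacian_linear[OF bounded_linear_mult_right assms(2)]
  by auto

lemma complex_quadratic_factor: "\<exists>k1 k2 :: complex. k1 + k2 = t \<and> k1 * k2 = d"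
proof (intro exI conjI)
  let ?s = "csqrt (t\<^sup>2 - 4 * d)"
  show "(t + ?s) / 2 + (t - ?s) / 2 = t" by (simp add: field_simps)
  have "(t + ?s) / 2 * ((t - ?s) / 2) = (t\<^sup>2 - ?s\<^sup>2) / 4" by (simp add: field_simps power2_eq_square)
  then show "(t + ?s) / 2 * ((t - ?s) / 2) = d" by simp
qed

lemma neumann_system_scalar_eigenfun:
  fixes w1 w2 :: "real^'n::finite \<Rightarrow> complex"
  assumes n: "neumann_fun \<Omega> \<rho> w1" "neumann_fun \<Omega> \<rho> w2" and nz: "\<exists>x\<in>\<Omega>. w1 x \<noteq> 0 \<or> w2 x \<noteq> 0"
    and e1: "\<And>x. x \<in> \<Omega> \<Longrightarrow> laplacian w1 x = m11 * w1 x + m12 * w2 x"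
    and e2: "\<And>x. x \<in> \<Omega> \<Longrightarrow> laplacian w2 x = m21 * w1 x + m22 * w2 x"
  obtains \<kappa> u where "neumann_fun \<Omega> \<rho> u" "\<exists>x\<in>\<Omega>. u x \<noteq> 0" "\<forall>x\<in>\<Omega>. laplacian u x = \<kappa> * u x"
    "\<kappa>\<^sup>2 - (m11 + m22) * \<kappa> + (m11 * m22 - m12 * m21) = 0"
proof -
  obtain k1 k2 where k: "k1 + k2 = m11 + m22" "k1 * k2 = m11 * m22 - m12 * m21"
    using complex_quadratic_factor by blast
  have root: "k\<^sup>2 - (m11 + m22) * k + (m11 * m22 - m12 * m21) = 0" if "k = k1 \<or> k = k2" for k
  proof -
    have "k\<^sup>2 - (m11 + m22) * k + (m11 * m22 - m12 * m21) = (k - k1) * (k - k2)"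
      unfolding k[symmetric] by (simp add: algebra_simps power2_eq_square)
    then show ?thesis using that by auto
  qed
  \<comment> \<open>\<open>(U1, U2) = (M - k2) (w1, w2)\<close> for the matrix \<open>M = (m\<^sub>i\<^sub>j)\<close>, so \<open>(M - k1)(M - k2) = 0\<close>
    makes it a \<open>k1\<close>-eigenfunction, and if it vanishes then \<open>(w1, w2)\<close> is a \<open>k2\<close>-eigenfunction.\<close>
  define U1 where "U1 x = (m11 - k2) * w1 x + m12 * w2 x" for x
  define U2 where "U2 x = m21 * w1 x + (m22 - k2) * w2 x" for x
  have U: "neumann_fun \<Omega> \<rho> U1" "neumann_fun \<Omega> \<rho> U2"
    unfolding U1_def U2_def by (simp_all add: neumann_fun_lincomb n)
  have lU: "laplacian U1 x = k1 * U1 x" "laplacian U2 x = k1 * U2 x" if "x \<in> \<Omega>" for x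
    unfolding U1_def U2_def laplacian_lincomb[OF n] e1[OF that] e2[OF that]
    using k by (simp_all add: algebra_simps) algebra+
  consider (U1) "\<exists>x\<in>\<Omega>. U1 x \<noteq> 0" | (U2) "\<exists>x\<in>\<Omega>. U2 x \<noteq> 0" | (zero) "\<forall>x\<in>\<Omega>. U1 x = 0 \<and> U2 x = 0"
    by blast
  then show ?thesis
  proof cases
    case U1 then show ?thesis using that[OF U(1) _ ballI[OF lU(1)] root] by blast
  next
    case U2 then show ?thesis using that[OF U(2) _ ballI[OF lU(2)] root] by blast
  next
    case zero
    then have "\<forall>x\<in>\<Omega>. laplacian w1 x = k2 * w1 x" "\<forall>x\<in>\<Omega>. laplacian w2 x = k2 * w2 x"
      using e1 e2 by (auto simp: U1_def U2_def algebra_simps)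
    then show ?thesis using nz that[OF n(1) _ _ root] that[OF n(2) _ _ root] by blast
  qed
qed

lemma neumann_eigenvalue_of_complex_eigenfun:
  fixes u :: "real^'n::finite \<Rightarrow> complex"
  assumes dom: "smooth_domain \<Omega> \<rho>" and spec: "neumann_eigenvalues \<Omega> \<rho> \<mu>"
    and u: "neumann_fun \<Omega> \<rho> u" "\<exists>x\<in>\<Omega>. u x \<noteq> 0" "\<And>x. x \<in> \<Omega> \<Longrightarrow> laplacian u x = \<kappa> * u x"
  obtains i where "\<kappa> = - complex_of_real (\<mu> i)"
proof -
  define p where "p x = Re (u x)" for x
  define q where "q x = Im (u x)" for x
  have np: "neumann_fun \<Omega> \<rho> p" and nq: "neumann_fun \<Omega> \<rho> q"
    unfolding p_def q_def by (simp_all add: neumann_fun_linear[OF bounded_linear_Re u(1)]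
        neumann_fun_linear[OF bounded_linear_Im u(1)])
  have lp: "laplacian p x = Re \<kappa> * p x - Im \<kappa> * q x"
    and lq: "laplacian q x = Im \<kappa> * p x + Re \<kappa> * q x" if "x \<in> \<Omega>" for x
    unfolding p_def q_def laplacian_linear[OF bounded_linear_Re u(1)] laplacian_linear[OF bounded_linear_Im u(1)]
    using u(3)[OF that] by simp_all
  obtain x0 where x0: "x0 \<in> \<Omega>" "p x0 \<noteq> 0 \<or> q x0 \<noteq> 0"
    using u(2) by (auto simp: p_def q_def complex_eq_iff)
  have "Im \<kappa> = 0" by (rule neumann_eigenpair_imaginary_part_eq_0[OF dom np nq lp lq]) (use x0 in auto)
  then have "neumann_eigenfun \<Omega> \<rho> (- Re \<kappa>) p" "neumann_eigenfun \<Omega> \<rho> (- Re \<kappa>) q"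
    using np nq lp lq by (auto simp: neumann_eigenfun_def)
  then have "\<exists>w. neumann_eigenfun \<Omega> \<rho> (- Re \<kappa>) w \<and> (\<exists>x\<in>\<Omega>. w x \<noteq> 0)" using x0 by blast
  then obtain i where "\<mu> i = - Re \<kappa>" using spec unfolding neumann_eigenvalues_def by blast
  then show ?thesis using that[of i] \<open>Im \<kappa> = 0\<close> by (simp add: complex_eq_iff)
qed

lemma Re_quadratic_root_neg:
  fixes \<xi> :: complex
  assumes "T < 0" "0 < D" "\<xi>\<^sup>2 - of_real T * \<xi> + of_real D = 0"
  shows "Re \<xi> < 0"
proof -
  have re: "Re \<xi> * Re \<xi> - Im \<xi> * Im \<xi> - T * Re \<xi> + D = 0"
    and im: "(2 * Re \<xi> - T) * Im \<xi> = 0"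
    using assms(3) unfolding complex_eq_iff by (simp_all add: power2_eq_square algebra_simps)
  show ?thesis
  proof (cases "Im \<xi> = 0")
    case True
    with re have "Re \<xi> * (Re \<xi> - T) = - D" by (simp add: algebra_simps)
    then show ?thesis using assms(1,2) by (smt (verit) mult_nonneg_nonneg)
  next
    case False
    then show ?thesis using im assms(1) by simp
  qed
qed

text \<open>Trace and determinant of the matrix by which \<open>L\<close> acts on \<open>(c1 w, c2 w)\<close> for a Neumann
  eigenfunction \<open>w\<close> of \<open>-\<Delta>\<close> with eigenvalue \<open>m\<close>.\<close>

definition mode_trace :: "real \<Rightarrow> real \<Rightarrow> real \<Rightarrow> real \<Rightarrow> real \<Rightarrow> real" where
  "mode_trace d1 d2 a11 a22 m = a11 + a22 - (d1 + d2) * m"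

definition mode_det :: "real \<Rightarrow> real \<Rightarrow> real \<Rightarrow> real \<Rightarrow> real \<Rightarrow> real \<Rightarrow> real \<Rightarrow> real" where
  "mode_det d1 d2 a11 a12 a21 a22 m = (a11 - d1 * m) * (a22 - d2 * m) - a12 * a21"

lemma L_eigenvalue_mode:
  fixes \<Omega> :: "(real^'n::finite) set"
  assumes dom: "smooth_domain \<Omega> \<rho>" and spec: "neumann_eigenvalues \<Omega> \<rho> \<mu>" and d: "d1 > 0" "d2 > 0"
    and "L_eigenvalue \<Omega> \<rho> d1 d2 a11 a12 a21 a22 \<xi>"
  obtains i where "\<xi>\<^sup>2 - of_real (mode_trace d1 d2 a11 a22 (\<mu> i)) * \<xi>
    + of_real (mode_det d1 d2 a11 a12 a21 a22 (\<mu> i)) = 0"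
proof -
  obtain w1 w2 :: "real^'n \<Rightarrow> complex" where n: "neumann_fun \<Omega> \<rho> w1" "neumann_fun \<Omega> \<rho> w2"
    and nz: "\<exists>x\<in>\<Omega>. w1 x \<noteq> 0 \<or> w2 x \<noteq> 0"
    and e1: "\<forall>x\<in>\<Omega>. of_real d1 * laplacian w1 x + of_real a11 * w1 x + of_real a12 * w2 x = \<xi> * w1 x"
    and e2: "\<forall>x\<in>\<Omega>. of_real a21 * w1 x + of_real d2 * laplacian w2 x + of_real a22 * w2 x = \<xi> * w2 x"
    using assms(5) unfolding L_eigenvalue_def by blast
  define m11 where "m11 = (\<xi> - of_real a11) / of_real d1"
  define m12 where "m12 = - of_real a12 / (of_real d1 :: complex)"
  define m21 where "m21 = - of_real a21 / (of_real d2 :: complex)"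
  define m22 where "m22 = (\<xi> - of_real a22) / of_real d2"
  have d': "(of_real d1 :: complex) \<noteq> 0" "(of_real d2 :: complex) \<noteq> 0" using d by auto
  have lap: "laplacian w1 x = m11 * w1 x + m12 * w2 x" "laplacian w2 x = m21 * w1 x + m22 * w2 x"
    if "x \<in> \<Omega>" for x
  proof -
    have "of_real d1 * laplacian w1 x = (\<xi> - of_real a11) * w1 x - of_real a12 * w2 x"
      "of_real d2 * laplacian w2 x = (\<xi> - of_real a22) * w2 x - of_real a21 * w1 x"
      using e1 e2 that by (auto simp: algebra_simps)
    moreover have "of_real d1 * (m11 * w1 x + m12 * w2 x) = (\<xi> - of_real a11) * w1 x - of_real a12 * w2 x"
      "of_real d2 * (m21 * w1 x + m22 * w2 x) = (\<xi> - of_real a22) * w2 x - of_real a21 * w1 x"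
      using d' by (simp_all add: m11_def m12_def m21_def m22_def field_simps)
    ultimately show "laplacian w1 x = m11 * w1 x + m12 * w2 x" "laplacian w2 x = m21 * w1 x + m22 * w2 x"
      using d' by (metis mult_left_cancel)+
  qed
  obtain \<kappa> u where u: "neumann_fun \<Omega> \<rho> u" "\<exists>x\<in>\<Omega>. u x \<noteq> 0" "\<forall>x\<in>\<Omega>. laplacian u x = \<kappa> * u x"
    and char: "\<kappa>\<^sup>2 - (m11 + m22) * \<kappa> + (m11 * m22 - m12 * m21) = 0"
    by (rule neumann_system_scalar_eigenfun[OF n nz lap])
  obtain i where \<kappa>: "\<kappa> = - of_real (\<mu> i)"
    by (rule neumann_eigenvalue_of_complex_eigenfun[OF dom spec u(1,2) u(3)[rule_format]])
  have "\<xi>\<^sup>2 - of_real (mode_trace d1 d2 a11 a22 (\<mu> i)) * \<xi> + of_real (mode_det d1 d2 a11 a12 a21 a22 (\<mu> i))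
      = of_real d1 * of_real d2 * (\<kappa>\<^sup>2 - (m11 + m22) * \<kappa> + (m11 * m22 - m12 * m21))"
    unfolding \<kappa> mode_trace_def mode_det_def m11_def m12_def m21_def m22_def using d'
    by (simp add: field_simps power2_eq_square)
  then show ?thesis using that char by simp
qed

lemma L_stable_if_modes:
  fixes \<Omega> :: "(real^'n::finite) set"
  assumes "smooth_domain \<Omega> \<rho>" "neumann_eigenvalues \<Omega> \<rho> \<mu>" "d1 > 0" "d2 > 0"
    and "\<And>i. mode_trace d1 d2 a11 a22 (\<mu> i) < 0" "\<And>i. 0 < mode_det d1 d2 a11 a12 a21 a22 (\<mu> i)"
  shows "L_stable \<Omega> \<rho> d1 d2 a11 a12 a21 a22"
  unfolding L_stable_def
proof (intro allI impI)
  fix \<xi> assume "L_eigenvalue \<Omega> \<rho> d1 d2 a11 a12 a21 a22 \<xi>"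
  then obtain i where "\<xi>\<^sup>2 - of_real (mode_trace d1 d2 a11 a22 (\<mu> i)) * \<xi>
    + of_real (mode_det d1 d2 a11 a12 a21 a22 (\<mu> i)) = 0"
    using L_eigenvalue_mode[OF assms(1-4)] by blast
  then show "Re \<xi> < 0" by (rule Re_quadratic_root_neg[OF assms(5,6)])
qed

lemma real_quadratic_pos_root:
  fixes T D :: real
  assumes "D < 0"
  obtains r where "0 < r" "r * r - T * r + D = 0"
proof
  define s where "s = sqrt (T\<^sup>2 - 4 * D)"
  have "0 \<le> T\<^sup>2 - 4 * D" using assms zero_le_power2[of T] by linarith
  then have s2: "s\<^sup>2 = T\<^sup>2 - 4 * D" unfolding s_def by simp
  have "\<bar>T\<bar> < s" unfolding s_def using assms by (intro real_less_rsqrt) (simp add: power2_abs)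
  then show "0 < (T + s) / 2" by (simp add: abs_less_iff)
  have "4 * ((T + s) / 2 * ((T + s) / 2) - T * ((T + s) / 2) + D) = s\<^sup>2 - T\<^sup>2 + 4 * D"
    by (simp add: power2_eq_square field_simps)
  then show "(T + s) / 2 * ((T + s) / 2) - T * ((T + s) / 2) + D = 0" using s2 by simp
qed

lemma L_eigenvalue_of_real_mode_root:
  fixes \<Omega> :: "(real^'n::finite) set"
  assumes spec: "neumann_eigenvalues \<Omega> \<rho> \<mu>" and "a12 \<noteq> 0"
    and r: "r * r - mode_trace d1 d2 a11 a22 (\<mu> i) * r + mode_det d1 d2 a11 a12 a21 a22 (\<mu> i) = 0"
  shows "L_eigenvalue \<Omega> \<rho> d1 d2 a11 a12 a21 a22 (complex_of_real r)"
proof -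
  obtain w where w: "neumann_eigenfun \<Omega> \<rho> (\<mu> i) w" "\<exists>x\<in>\<Omega>. w x \<noteq> 0"
    using spec unfolding neumann_eigenvalues_def by blast
  have nw: "neumann_fun \<Omega> \<rho> w" and lw: "\<And>x. x \<in> \<Omega> \<Longrightarrow> laplacian w x = - \<mu> i * w x"
    using w(1) unfolding neumann_eigenfun_def by auto
  \<comment> \<open>\<open>(a12, r - a11 + d1 \<mu>\<^sub>i)\<close> is an eigenvector of the mode matrix for the eigenvalue \<open>r\<close>\<close>
  define c2 where "c2 = r - a11 + d1 * \<mu> i"
  define w1 where "w1 x = complex_of_real (a12 * w x)" for x
  define w2 where "w2 x = complex_of_real (c2 * w x)" for x
  have bl: "bounded_linear (\<lambda>t. complex_of_real (c * t))" for c :: real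
    by (rule bounded_linear_compose[OF bounded_linear_of_real bounded_linear_mult_right])
  have n: "neumann_fun \<Omega> \<rho> w1" "neumann_fun \<Omega> \<rho> w2"
    unfolding w1_def w2_def by (rule neumann_fun_linear[OF bl nw])+
  have l: "laplacian w1 x = complex_of_real (a12 * laplacian w x)"
    "laplacian w2 x = complex_of_real (c2 * laplacian w x)" for x
    unfolding w1_def w2_def by (rule laplacian_linear[OF bl nw])+
  have c2: "a21 * a12 + d2 * (c2 * (- \<mu> i)) + a22 * c2 = r * c2"
    using r by (simp add: c2_def mode_trace_def mode_det_def algebra_simps)
  show ?thesis unfolding L_eigenvalue_def
  proof (intro exI conjI ballI)
    show "\<exists>x\<in>\<Omega>. w1 x \<noteq> 0 \<or> w2 x \<noteq> 0" using w(2) \<open>a12 \<noteq> 0\<close> by (auto simp: w1_def)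
    fix x assume "x \<in> \<Omega>"
    show "of_real d1 * laplacian w1 x + of_real a11 * w1 x + of_real a12 * w2 x = complex_of_real r * w1 x"
      unfolding l lw[OF \<open>x \<in> \<Omega>\<close>] w1_def w2_def of_real_mult[symmetric] of_real_add[symmetric]
      by (simp add: c2_def algebra_simps)
    have "a21 * (a12 * w x) + d2 * (c2 * (- \<mu> i * w x)) + a22 * (c2 * w x) = r * (c2 * w x)"
      using arg_cong[OF c2, of "\<lambda>t. t * w x"] by (simp add: algebra_simps)
    then show "of_real a21 * w1 x + of_real d2 * laplacian w2 x + of_real a22 * w2 x = complex_of_real r * w2 x"
      unfolding l lw[OF \<open>x \<in> \<Omega>\<close>] w1_def w2_def of_real_mult[symmetric] of_real_add[symmetric]
      by (simp only: of_real_eq_iff)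
  qed (use n in auto)
qed

lemma L_unstable_if_mode:
  fixes \<Omega> :: "(real^'n::finite) set"
  assumes "neumann_eigenvalues \<Omega> \<rho> \<mu>" "a12 \<noteq> 0" "mode_det d1 d2 a11 a12 a21 a22 (\<mu> i) < 0"
  shows "L_unstable \<Omega> \<rho> d1 d2 a11 a12 a21 a22"
proof -
  obtain r where "0 < r" "r * r - mode_trace d1 d2 a11 a22 (\<mu> i) * r + mode_det d1 d2 a11 a12 a21 a22 (\<mu> i) = 0"
    using real_quadratic_pos_root[OF assms(3)] by blast
  then show ?thesis
    using L_eigenvalue_of_real_mode_root[OF assms(1,2)] unfolding L_unstable_def by force
qed

section \<open>The critical diffusion ratio\<close>

lemma finite_i_alpha_set:
  fixes \<mu> :: "nat \<Rightarrow> real"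
  assumes "filterlim \<mu> at_top sequentially" "d1 > 0"
  shows "finite {i. 1 \<le> i \<and> (\<forall>j\<in>{1..i}. d1 * \<mu> j < F0)}"
proof -
  obtain N where N: "\<And>n. n \<ge> N \<Longrightarrow> F0 / d1 \<le> \<mu> n"
    using assms(1) by (auto simp: filterlim_at_top eventually_sequentially)
  have "d1 * \<mu> i < F0 \<Longrightarrow> i < N" for i
    using N[of i] assms(2) by (force simp: field_simps)
  then have "{i. 1 \<le> i \<and> (\<forall>j\<in>{1..i}. d1 * \<mu> j < F0)} \<subseteq> {..<N}" by auto
  then show ?thesis by (rule finite_subset) simp
qed

lemma d_crit_le_d_tilde:
  fixes \<mu> :: "nat \<Rightarrow> real"
  assumes "mono \<mu>" "filterlim \<mu> at_top sequentially" "d1 > 0" "1 \<le> i" "d1 * \<mu> i < F0"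
  shows "d_crit pa c d1 \<mu> F0 \<le> d_tilde pa c d1 \<mu> F0 i"
proof -
  have "d1 * \<mu> j < F0" if "j \<in> {1..i}" for j
  proof -
    have "\<mu> j \<le> \<mu> i" using that assms(1) by (simp add: monoD)
    then show ?thesis using assms(3,5) by (smt (verit) mult_left_mono)
  qed
  then have "i \<le> i_alpha d1 \<mu> F0"
    unfolding i_alpha_def using finite_i_alpha_set[OF assms(2,3)] assms(4) by (intro Max_ge) blast+
  then show ?thesis unfolding d_crit_def using assms(4) by (intro Min_le) auto
qed

lemma d_crit_attained:
  fixes \<mu> :: "nat \<Rightarrow> real"
  assumes "filterlim \<mu> at_top sequentially" "d1 > 0" "d1 * \<mu> 1 < F0"
  obtains i where "1 \<le> i" "d1 * \<mu> i < F0" "d_crit pa c d1 \<mu> F0 = d_tilde pa c d1 \<mu> F0 i"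
proof -
  let ?S = "{i. 1 \<le> i \<and> (\<forall>j\<in>{1..i}. d1 * \<mu> j < F0)}"
  have "1 \<in> ?S" using assms(3) by auto
  then have "i_alpha d1 \<mu> F0 \<in> ?S"
    unfolding i_alpha_def using finite_i_alpha_set[OF assms(1,2)] by (intro Max_in) auto
  then have "d_crit pa c d1 \<mu> F0 \<in> d_tilde pa c d1 \<mu> F0 ` {1..i_alpha d1 \<mu> F0}"
    "\<forall>j\<in>{1..i_alpha d1 \<mu> F0}. d1 * \<mu> j < F0"
    unfolding d_crit_def by (auto intro!: Min_in)
  then show ?thesis using that by auto
qed

lemma mode_det_reaction:
  "mode_det d1 d2 (fa * pa) (- lam * pa) (\<sigma> * ga * pa) (- \<sigma> * pa) m
    = \<sigma> * (pa * (m * d1 + pa * (lam * ga - fa))) - d2 * (m * (fa * pa - m * d1))"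
  by (simp add: mode_det_def algebra_simps)

lemma
  assumes "0 < \<sigma>" "0 < \<mu> i" "d1 * \<mu> i < fa * pa"
  shows mode_det_reaction_pos_iff: "0 < mode_det d1 d2 (fa * pa) (- lam * pa) (\<sigma> * ga * pa) (- \<sigma> * pa) (\<mu> i)
      \<longleftrightarrow> d2 / \<sigma> < d_tilde pa (lam * ga - fa) d1 \<mu> (fa * pa) i"
    and mode_det_reaction_neg_iff: "mode_det d1 d2 (fa * pa) (- lam * pa) (\<sigma> * ga * pa) (- \<sigma> * pa) (\<mu> i) < 0
      \<longleftrightarrow> d_tilde pa (lam * ga - fa) d1 \<mu> (fa * pa) i < d2 / \<sigma>"
proof -
  have "0 < \<mu> i * (fa * pa - \<mu> i * d1)" using assms(2,3) by (simp add: mult.commute)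
  then show "0 < mode_det d1 d2 (fa * pa) (- lam * pa) (\<sigma> * ga * pa) (- \<sigma> * pa) (\<mu> i)
      \<longleftrightarrow> d2 / \<sigma> < d_tilde pa (lam * ga - fa) d1 \<mu> (fa * pa) i"
    "mode_det d1 d2 (fa * pa) (- lam * pa) (\<sigma> * ga * pa) (- \<sigma> * pa) (\<mu> i) < 0
      \<longleftrightarrow> d_tilde pa (lam * ga - fa) d1 \<mu> (fa * pa) i < d2 / \<sigma>"
    unfolding mode_det_reaction d_tilde_def using assms(1)
    by (simp_all add: divide_less_eq less_divide_eq mult_ac)
qed

lemma mode_det_reaction_pos_outside_band:
  assumes "0 < pa" "0 < fa" "fa < lam * ga" "0 < \<sigma>" "0 < d1" "0 < d2" "0 \<le> m"
    and "m = 0 \<or> fa * pa \<le> d1 * m"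
  shows "0 < mode_det d1 d2 (fa * pa) (- lam * pa) (\<sigma> * ga * pa) (- \<sigma> * pa) m"
  using assms(8)
proof
  assume "m = 0"
  then show ?thesis unfolding mode_det_reaction using assms(1-4) by simp
next
  assume "fa * pa \<le> d1 * m"
  moreover have "0 \<le> \<sigma> * pa + d2 * m" using assms by simp
  ultimately have "0 \<le> (fa * pa - d1 * m) * (- \<sigma> * pa - d2 * m)"
    by (intro mult_nonpos_nonpos) auto
  moreover have "0 < lam * ga * (\<sigma> * pa * pa)" using assms(1-4) by simp
  ultimately show ?thesis by (simp add: mode_det_def algebra_simps)
qed

lemma reaction_mode_trace_neg:
  assumes "0 < pa" "fa < \<sigma>" "0 < d1" "0 < d2" "0 \<le> m"
  shows "mode_trace d1 d2 (fa * pa) (- \<sigma> * pa) m < 0"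
proof -
  have "fa * pa < \<sigma> * pa" "0 \<le> (d1 + d2) * m" using assms by simp_all
  then show ?thesis by (simp add: mode_trace_def)
qed

lemma reaction_mode_det_pos:
  fixes \<mu> :: "nat \<Rightarrow> real"
  assumes \<mu>: "mono \<mu>" "\<mu> 0 = 0" "filterlim \<mu> at_top sequentially"
    and pos: "0 < pa" "0 < fa" "fa < lam * ga" "0 < \<sigma>" "0 < d1" "0 < d2"
    and H: "fa * pa \<le> \<mu> 1 * d1 \<or> d2 / \<sigma> < d_crit pa (lam * ga - fa) d1 \<mu> (fa * pa)"
  shows "0 < mode_det d1 d2 (fa * pa) (- lam * pa) (\<sigma> * ga * pa) (- \<sigma> * pa) (\<mu> i)"
proof (cases "0 < \<mu> i \<and> d1 * \<mu> i < fa * pa")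
  case True
  then have "i \<noteq> 0" using \<mu>(2) by (metis less_irrefl)
  then have "1 \<le> i" "\<mu> 1 \<le> \<mu> i" using \<mu>(1) by (simp_all add: monoD)
  then have "d2 / \<sigma> < d_tilde pa (lam * ga - fa) d1 \<mu> (fa * pa) i"
    using H True pos(5) d_crit_le_d_tilde[OF \<mu>(1,3) pos(5)] mult_right_mono[of "\<mu> 1" "\<mu> i" d1]
    by (smt (verit) mult.commute)
  then show ?thesis using mode_det_reaction_pos_iff[where \<mu> = \<mu> and i = i, OF pos(4) True[THEN conjunct1] True[THEN conjunct2]]
    by simp
next
  case False
  moreover have "0 \<le> \<mu> i" using \<mu>(1,2) by (metis le0 monoD)
  ultimately have "\<mu> i = 0 \<or> fa * pa \<le> d1 * \<mu> i" by auto
  with pos \<open>0 \<le> \<mu> i\<close> show ?thesis by (rule mode_det_reaction_pos_outside_band)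
qed

lemma reaction_mode_det_neg:
  fixes \<mu> :: "nat \<Rightarrow> real"
  assumes \<mu>: "mono \<mu>" "0 < \<mu> 1" "filterlim \<mu> at_top sequentially" and "0 < \<sigma>" "0 < d1"
    and H: "\<mu> 1 * d1 < fa * pa" "d_crit pa (lam * ga - fa) d1 \<mu> (fa * pa) < d2 / \<sigma>"
  obtains i where "mode_det d1 d2 (fa * pa) (- lam * pa) (\<sigma> * ga * pa) (- \<sigma> * pa) (\<mu> i) < 0"
proof -
  obtain i where i: "1 \<le> i" "d1 * \<mu> i < fa * pa"
    "d_crit pa (lam * ga - fa) d1 \<mu> (fa * pa) = d_tilde pa (lam * ga - fa) d1 \<mu> (fa * pa) i"
    using d_crit_attained[OF \<mu>(3) \<open>0 < d1\<close>] H(1) by (metis mult.commute)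
  have "0 < \<mu> i" using \<mu>(1,2) i(1) by (metis monoD less_le_trans)
  then have "mode_det d1 d2 (fa * pa) (- lam * pa) (\<sigma> * ga * pa) (- \<sigma> * pa) (\<mu> i) < 0"
    using mode_det_reaction_neg_iff[where \<mu> = \<mu> and i = i, OF \<open>0 < \<sigma>\<close> _ i(2)] H(2) i(3) by simp
  then show ?thesis by (rule that)
qed

theorem proposition3:
  fixes \<Omega> :: "(real^'n::finite) set" and \<rho> :: "real^'n \<Rightarrow> real" and \<mu> :: "nat \<Rightarrow> real"
    and d1 d2 lam \<sigma> \<delta> \<alpha> :: real
    and \<phi> f g \<phi>' f' g' :: "real \<Rightarrow> real"
  assumes dom: "smooth_domain \<Omega> \<rho>"
    and spec: "neumann_eigenvalues \<Omega> \<rho> \<mu>"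
    and mu0: "\<mu> 0 = 0" and mu1: "0 < \<mu> 1" and mu_lim: "filterlim \<mu> at_top sequentially"
    and pos: "d1 > 0" "d2 > 0" "lam > 0" "\<sigma> > 0"
    and deriv_phi: "\<And>x. x \<ge> 0 \<Longrightarrow> (\<phi> has_real_derivative \<phi>' x) (at x within {0..})"
    and deriv_f: "\<And>x. x \<ge> 0 \<Longrightarrow> (f has_real_derivative f' x) (at x within {0..})"
    and deriv_g: "\<And>x. x \<ge> 0 \<Longrightarrow> (g has_real_derivative g' x) (at x within {0..})"
    and cont_d: "continuous_on {0..} \<phi>'" "continuous_on {0..} f'" "continuous_on {0..} g'"
    and delta: "\<delta> > 0" "\<phi> 0 = 0" "f \<delta> = 0"
    and on_delta: "\<And>u. 0 < u \<Longrightarrow> u < \<delta> \<Longrightarrow> g u > 0 \<and> f u > 0 \<and> \<phi> u > 0 \<and> g' u \<ge> 0"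
    and alpha: "0 < \<alpha>" "\<alpha> < \<delta>" "lam * g \<alpha> = f \<alpha>"
    and alpha_sign: "\<And>u. 0 < u \<Longrightarrow> u < \<delta> \<Longrightarrow> u \<noteq> \<alpha> \<Longrightarrow> (\<alpha> - u) * (f u - lam * g u) > 0"
    and fprime: "0 < f' \<alpha>" "f' \<alpha> < min \<sigma> (lam * g' \<alpha>)"
  shows "((\<mu> 1 * d1 \<ge> (f' \<alpha> * \<phi> \<alpha>) \<or> (\<mu> 1 * d1 < (f' \<alpha> * \<phi> \<alpha>) \<and> 0 < d2 / \<sigma> \<and> d2 / \<sigma> < d_crit (\<phi> \<alpha>) (lam * g' \<alpha> - f' \<alpha>) d1 \<mu> (f' \<alpha> * \<phi> \<alpha>))) \<longrightarrow>
           L_stable \<Omega> \<rho> d1 d2 (f' \<alpha> * \<phi> \<alpha>) (- lam * \<phi> \<alpha>) (\<sigma> * g' \<alpha> * \<phi> \<alpha>) (- \<sigma> * \<phi> \<alpha>)) \<and>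
         ((\<mu> 1 * d1 < (f' \<alpha> * \<phi> \<alpha>) \<and> d_crit (\<phi> \<alpha>) (lam * g' \<alpha> - f' \<alpha>) d1 \<mu> (f' \<alpha> * \<phi> \<alpha>) < d2 / \<sigma>) \<longrightarrow>
           L_unstable \<Omega> \<rho> d1 d2 (f' \<alpha> * \<phi> \<alpha>) (- lam * \<phi> \<alpha>) (\<sigma> * g' \<alpha> * \<phi> \<alpha>) (- \<sigma> * \<phi> \<alpha>))"
proof -
  have mono: "mono \<mu>" using spec by (simp add: neumann_eigenvalues_def)
  have pa: "0 < \<phi> \<alpha>" using on_delta[OF alpha(1,2)] by simp
  have "0 \<le> \<mu> i" for i using mono mu0 by (metis le0 monoD)
  then have trace: "mode_trace d1 d2 (f' \<alpha> * \<phi> \<alpha>) (- \<sigma> * \<phi> \<alpha>) (\<mu> i) < 0" for i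
    using reaction_mode_trace_neg[OF pa _ pos(1,2)] fprime(2) by simp
  show ?thesis
  proof (intro conjI impI)
    assume "\<mu> 1 * d1 \<ge> (f' \<alpha> * \<phi> \<alpha>) \<or> (\<mu> 1 * d1 < (f' \<alpha> * \<phi> \<alpha>) \<and> 0 < d2 / \<sigma>
      \<and> d2 / \<sigma> < d_crit (\<phi> \<alpha>) (lam * g' \<alpha> - f' \<alpha>) d1 \<mu> (f' \<alpha> * \<phi> \<alpha>))"
    then have "0 < mode_det d1 d2 (f' \<alpha> * \<phi> \<alpha>) (- lam * \<phi> \<alpha>) (\<sigma> * g' \<alpha> * \<phi> \<alpha>) (- \<sigma> * \<phi> \<alpha>) (\<mu> i)" for i
      using reaction_mode_det_pos[OF mono mu0 mu_lim pa fprime(1) _ pos(4,1,2)] fprime(2) by auto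
    then show "L_stable \<Omega> \<rho> d1 d2 (f' \<alpha> * \<phi> \<alpha>) (- lam * \<phi> \<alpha>) (\<sigma> * g' \<alpha> * \<phi> \<alpha>) (- \<sigma> * \<phi> \<alpha>)"
      by (rule L_stable_if_modes[OF dom spec pos(1,2) trace])
  next
    assume "\<mu> 1 * d1 < (f' \<alpha> * \<phi> \<alpha>) \<and> d_crit (\<phi> \<alpha>) (lam * g' \<alpha> - f' \<alpha>) d1 \<mu> (f' \<alpha> * \<phi> \<alpha>) < d2 / \<sigma>"
    then obtain i where "mode_det d1 d2 (f' \<alpha> * \<phi> \<alpha>) (- lam * \<phi> \<alpha>) (\<sigma> * g' \<alpha> * \<phi> \<alpha>) (- \<sigma> * \<phi> \<alpha>) (\<mu> i) < 0"
      using reaction_mode_det_neg[OF mono mu1 mu_lim pos(4,1)] by blast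
    moreover have "- lam * \<phi> \<alpha> \<noteq> 0" using pos(3) pa by simp
    ultimately show "L_unstable \<Omega> \<rho> d1 d2 (f' \<alpha> * \<phi> \<alpha>) (- lam * \<phi> \<alpha>) (\<sigma> * g' \<alpha> * \<phi> \<alpha>) (- \<sigma> * \<phi> \<alpha>)"
      using L_unstable_if_mode[OF spec] by blast
  qed
qed

end
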